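(* Let $A$ be a commutative unital ring, $d$ a derivation of $A$, and $B$ a commutative unital $A$-algebra which is finitely generated and free as an $A$-module. Let $\delta$ be a derivation of $B$ such that the structure map $A\to B$ is a differential homomorphism $(A,d)\to(B,\delta)$. Let $(D,\partial_D)$ be a differential $(B,\delta)$-algebra, i.e. $D$ is a $B$-algebra, $\partial_D$ a derivation of $D$, and the structure map $(B,\delta)\to(D,\partial_D)$ is differential. Let $W(D)$ be the classical Weil descent of $D$ from $B$ to $A$ with unit $W_D:D\to W(D)\otimes_A B$. Then there is a unique derivation $\partial_D^W$ on $W(D)$ such that $(W(D),\partial_D^W)$ is a differential $(A,d)$-algebra and $$W_D:(D,\partial_D)\to (W(D)\otimes_A B,\ \partial_D^W\otimes\delta)$$ is a differential $(B,\delta)$-algebra homomorphism, i.e. $W_D\circ\partial_D=(\partial_D^W\otimes\delta)\circ W_D$. Furthermore, $\partial_D^W$ only depends on $\partial_D$ and not on $\delta$: if $\delta'$ is another derivation of $B$ such that $(B,\delta')$ is a differential $(A,d)$-algebra and $(D,\partial_D)$ is a differential $(B,\delta')$-algebra, then the derivation of $W(D)$ obtained in the same way from $\delta'$ coincides with $\partial_D^W$.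
   Context: All rings and algebras are commutative and unital, homomorphisms unital. Classical Weil descent: for an $A$-algebra $B$ that is free of finite rank as an $A$-module, let $F$ be the functor from $A$-algebras to $B$-algebras, $C\mapsto C\otimes_A B$ (structure map $b\mapsto 1\otimes b$). For a $B$-algebra $D$ the Weil descent is an $A$-algebra $W(D)$ together with a $B$-algebra homomorphism $W_D:D\to W(D)\otimes_A B$ (the unit) such that for every $A$-algebra $C$ and every $B$-algebra homomorphism $f:D\to C\otimes_A B$ there is a unique $A$-algebra homomorphism $g:W(D)\to C$ with $(g\otimes \mathrm{id}_B)\circ W_D=f$; this determines $(W(D),W_D)$ up to unique isomorphism. If $(C,\partial_C)$ is a differential $(A,d)$-algebra (an $A$-algebra with a derivation such that $A\to C$ is a differential map $(A,d)\to(C,\partial_C)$), then $\partial_C\otimes\delta$ denotes the unique derivation on $C\otimes_A B$ such that the natural maps $C\to C\otimes_A B$ and $B\to C\otimes_A B$ are differential. *)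

theory Defs
  imports "HOL-Algebra.Ring" "HOL-Algebra.RingHom"
begin

definition derivation :: "('r, 'm) ring_scheme \<Rightarrow> ('r \<Rightarrow> 'r) \<Rightarrow> bool" where
  "derivation R D \<longleftrightarrow> D \<in> carrier R \<rightarrow> carrier R \<and>
     (\<forall>x\<in>carrier R. \<forall>y\<in>carrier R.
        D (x \<oplus>\<^bsub>R\<^esub> y) = D x \<oplus>\<^bsub>R\<^esub> D y \<and>
        D (x \<otimes>\<^bsub>R\<^esub> y) = (D x \<otimes>\<^bsub>R\<^esub> y) \<oplus>\<^bsub>R\<^esub> (x \<otimes>\<^bsub>R\<^esub> D y))"

definition diff_hom ::
  "('r, 'm) ring_scheme \<Rightarrow> ('r \<Rightarrow> 'r) \<Rightarrow> ('s, 'n) ring_scheme \<Rightarrow> ('s \<Rightarrow> 's) \<Rightarrow> ('r \<Rightarrow> 's) \<Rightarrow> bool" where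
  "diff_hom R dR S dS f \<longleftrightarrow> f \<in> ring_hom R S \<and> (\<forall>x\<in>carrier R. f (dR x) = dS (f x))"

definition is_basis ::
  "'a ring \<Rightarrow> 'b ring \<Rightarrow> ('a \<Rightarrow> 'b) \<Rightarrow> 'b list \<Rightarrow> bool" where
  "is_basis A B phi es \<longleftrightarrow> set es \<subseteq> carrier B \<and>
     (\<forall>b\<in>carrier B. \<exists>!c. c \<in> {..<length es} \<rightarrow>\<^sub>E carrier A \<and>
         b = finsum B (\<lambda>k. phi (c k) \<otimes>\<^bsub>B\<^esub> es ! k) {..<length es})"

definition coords :: "'a ring \<Rightarrow> 'b ring \<Rightarrow> ('a \<Rightarrow> 'b) \<Rightarrow> 'b list \<Rightarrow> 'b \<Rightarrow> nat \<Rightarrow> 'a" where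
  "coords A B phi es b = (THE c. c \<in> {..<length es} \<rightarrow>\<^sub>E carrier A \<and>
         b = finsum B (\<lambda>k. phi (c k) \<otimes>\<^bsub>B\<^esub> es ! k) {..<length es})"

text \<open>Realised as C^n (n = length es): the vector (v_k) stands for
  the sum over k of v_k \<otimes> e_k. Multiplication uses the structure constants of B.
  psi : A -> C is the structure map of the A-algebra C.\<close>
definition tensor :: "'a ring \<Rightarrow> 'b ring \<Rightarrow> ('a \<Rightarrow> 'b) \<Rightarrow> 'b list \<Rightarrow> 'c ring \<Rightarrow> ('a \<Rightarrow> 'c)
    \<Rightarrow> (nat \<Rightarrow> 'c) ring" where
  "tensor A B phi es C psi =
    \<lparr> carrier = {..<length es} \<rightarrow>\<^sub>E carrier C,
      mult = (\<lambda>u v. \<lambda>k\<in>{..<length es}.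
                 finsum C (\<lambda>i. finsum C (\<lambda>j.
                    (u i \<otimes>\<^bsub>C\<^esub> v j) \<otimes>\<^bsub>C\<^esub>
                      psi (coords A B phi es (es ! i \<otimes>\<^bsub>B\<^esub> es ! j) k))
                  {..<length es}) {..<length es}),
      one = (\<lambda>k\<in>{..<length es}. psi (coords A B phi es \<one>\<^bsub>B\<^esub> k)),
      zero = (\<lambda>k\<in>{..<length es}. \<zero>\<^bsub>C\<^esub>),
      add = (\<lambda>u v. \<lambda>k\<in>{..<length es}. u k \<oplus>\<^bsub>C\<^esub> v k) \<rparr>"

text \<open>The natural map C -> C \<otimes>_A B, c \<mapsto> c \<otimes> 1.\<close>
definition tensor_inl :: "'a ring \<Rightarrow> 'b ring \<Rightarrow> ('a \<Rightarrow> 'b) \<Rightarrow> 'b list \<Rightarrow> 'c ring \<Rightarrow> ('a \<Rightarrow> 'c)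
    \<Rightarrow> 'c \<Rightarrow> (nat \<Rightarrow> 'c)" where
  "tensor_inl A B phi es C psi c =
     (\<lambda>k\<in>{..<length es}. c \<otimes>\<^bsub>C\<^esub> psi (coords A B phi es \<one>\<^bsub>B\<^esub> k))"

text \<open>The natural map B -> C \<otimes>_A B, b \<mapsto> 1 \<otimes> b (the B-algebra structure map).\<close>
definition tensor_inr :: "'a ring \<Rightarrow> 'b ring \<Rightarrow> ('a \<Rightarrow> 'b) \<Rightarrow> 'b list \<Rightarrow> 'c ring \<Rightarrow> ('a \<Rightarrow> 'c)
    \<Rightarrow> 'b \<Rightarrow> (nat \<Rightarrow> 'c)" where
  "tensor_inr A B phi es C psi b = (\<lambda>k\<in>{..<length es}. psi (coords A B phi es b k))"

text \<open>g \<otimes> id_B : C \<otimes>_A B -> C' \<otimes>_A B.\<close>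
definition tensor_map :: "'b list \<Rightarrow> ('c \<Rightarrow> 'e) \<Rightarrow> (nat \<Rightarrow> 'c) \<Rightarrow> (nat \<Rightarrow> 'e)" where
  "tensor_map es g v = (\<lambda>k\<in>{..<length es}. g (v k))"

text \<open>\<partial>_C \<otimes> \<delta>: the unique derivation of C \<otimes>_A B such that the natural maps from C
  and from B are differential (taken extensional on the carrier).\<close>
definition tensor_deriv :: "'a ring \<Rightarrow> 'b ring \<Rightarrow> ('a \<Rightarrow> 'b) \<Rightarrow> 'b list \<Rightarrow> 'c ring \<Rightarrow> ('a \<Rightarrow> 'c)
    \<Rightarrow> ('c \<Rightarrow> 'c) \<Rightarrow> ('b \<Rightarrow> 'b) \<Rightarrow> (nat \<Rightarrow> 'c) \<Rightarrow> (nat \<Rightarrow> 'c)" where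
  "tensor_deriv A B phi es C psi dC dB =
     (THE E. derivation (tensor A B phi es C psi) E \<and>
             E \<in> extensional (carrier (tensor A B phi es C psi)) \<and>
             diff_hom C dC (tensor A B phi es C psi) E (tensor_inl A B phi es C psi) \<and>
             diff_hom B dB (tensor A B phi es C psi) E (tensor_inr A B phi es C psi))"

text \<open>Test algebras C range over
  rings whose carrier lies in the type 'w \<times> 'w.\<close>
definition is_weil_descent ::
  "'a ring \<Rightarrow> 'b ring \<Rightarrow> ('a \<Rightarrow> 'b) \<Rightarrow> 'b list \<Rightarrow> 'd ring \<Rightarrow> ('b \<Rightarrow> 'd)
   \<Rightarrow> 'w ring \<Rightarrow> ('a \<Rightarrow> 'w) \<Rightarrow> ('d \<Rightarrow> (nat \<Rightarrow> 'w)) \<Rightarrow> bool" where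
  "is_weil_descent A B phi es D phiD W phiW u \<longleftrightarrow>
     cring W \<and> phiW \<in> ring_hom A W \<and>
     u \<in> ring_hom D (tensor A B phi es W phiW) \<and>
     (\<forall>b\<in>carrier B. u (phiD b) = tensor_inr A B phi es W phiW b) \<and>
     (\<forall>(C :: ('w \<times> 'w) ring) psi f.
        cring C \<and> psi \<in> ring_hom A C \<and>
        f \<in> ring_hom D (tensor A B phi es C psi) \<and>
        (\<forall>b\<in>carrier B. f (phiD b) = tensor_inr A B phi es C psi b) \<longrightarrow>
        (\<exists>g. g \<in> ring_hom W C \<and> (\<forall>a\<in>carrier A. g (phiW a) = psi a) \<and>
             (\<forall>x\<in>carrier D. tensor_map es g (u x) = f x) \<and>
             (\<forall>g'. g' \<in> ring_hom W C \<and> (\<forall>a\<in>carrier A. g' (phiW a) = psi a) \<and>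
                   (\<forall>x\<in>carrier D. tensor_map es g' (u x) = f x) \<longrightarrow>
                   (\<forall>w\<in>carrier W. g' w = g w))))"

definition weil_deriv_cond ::
  "'a ring \<Rightarrow> ('a \<Rightarrow> 'a) \<Rightarrow> 'b ring \<Rightarrow> ('a \<Rightarrow> 'b) \<Rightarrow> 'b list \<Rightarrow> ('b \<Rightarrow> 'b)
   \<Rightarrow> 'd ring \<Rightarrow> ('d \<Rightarrow> 'd) \<Rightarrow> 'w ring \<Rightarrow> ('a \<Rightarrow> 'w) \<Rightarrow> ('d \<Rightarrow> (nat \<Rightarrow> 'w))
   \<Rightarrow> ('w \<Rightarrow> 'w) \<Rightarrow> bool" where
  "weil_deriv_cond A d B phi es dB D dD W phiW u dW \<longleftrightarrow>
     derivation W dW \<and> diff_hom A d W dW phiW \<and>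
     diff_hom D dD (tensor A B phi es W phiW) (tensor_deriv A B phi es W phiW dW dB) u"

end

(*
  Fix a basis e_1, ..., e_n of B over A. Then W \<otimes>\<^sub>A B is W^n with multiplication given by the
  structure constants of B, and for a derivation \<partial> of W over d the derivation \<partial> \<otimes> \<delta> acts on
  coordinate vectors by v \<mapsto> \<partial> v + L\<^sub>\<delta> v, where L\<^sub>\<delta>(\<Sum>\<^sub>j v\<^sub>j \<otimes> e\<^sub>j) = \<Sum>\<^sub>j v\<^sub>j \<otimes> \<delta> e\<^sub>j.

  Derivations of W over d are the same as A-algebra maps w \<mapsto> w + \<epsilon> \<partial> w from W into the dual
  numbers W[\<epsilon>], made an A-algebra through a \<mapsto> a + \<epsilon> d a. The map
  x \<mapsto> u x + \<epsilon> (u (\<partial>\<^sub>D x) - L\<^sub>\<delta> (u x)) from D to W[\<epsilon>] \<otimes>\<^sub>A B is a B-algebra map, so the universal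
  property of the Weil descent factors it through a unique A-algebra map g : W \<rightarrow> W[\<epsilon>]. Uniqueness
  (applied once more, to the map x \<mapsto> u x) shows that g is the identity modulo \<epsilon>, so g = id + \<epsilon> \<partial>\<^sup>W,
  and \<partial>\<^sup>W is the required derivation; conversely every such derivation yields a factorization, whence
  uniqueness. Finally L\<^sub>\<delta> (u x) only involves the images of \<delta> e\<^sub>j in W \<otimes>\<^sub>A B, which are
  u (\<partial>\<^sub>D e\<^sub>j) whatever \<delta> is, so \<partial>\<^sup>W does not depend on \<delta>.
*)
theory Submission
  imports Defs
begin

lemma foldSetD_cong:
  assumes "(B, y) \<in> foldSetD D f e"
  shows "B \<subseteq> S \<Longrightarrow> (\<forall>x\<in>S. f x = g x) \<Longrightarrow> (B, y) \<in> foldSetD D g e"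
  using assms
proof (induction rule: foldSetD.induct)
  case (emptyI) then show ?case by (simp add: foldSetD.emptyI)
next
  case (insertI x A y)
  then have "f x = g x" by auto
  with insertI show ?case by (metis foldSetD.insertI insert_subset)
qed

lemma foldD_cong_pointwise:
  assumes "\<forall>x\<in>S. f x = g x"
  shows "foldD D f e S = foldD D g e S"
proof -
  have "\<And>y. (S, y) \<in> foldSetD D f e \<longleftrightarrow> (S, y) \<in> foldSetD D g e"
    using foldSetD_cong[of S _ D f e S g] foldSetD_cong[of S _ D g e S f] assms
    by auto
  then show ?thesis unfolding foldD_def by simp
qed

lemma finsum_cong_pointwise:
  assumes "\<And>i. i \<in> S \<Longrightarrow> f i = g i"
  shows "finsum R f S = finsum R g S"
proof -
  have "\<forall>x\<in>S. (add R \<circ> f) x = (add R \<circ> g) x" using assms by auto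
  then show ?thesis unfolding finsum_def finprod_def
    using foldD_cong_pointwise[of S "add R \<circ> f" "add R \<circ> g"] by simp
qed

lemma finsum_cong_simp:
  "S = S' \<Longrightarrow> (\<And>i. i \<in> S' =simp=> f i = g i) \<Longrightarrow> finsum R f S = finsum R g S'"
  unfolding simp_implies_def by (auto intro: finsum_cong_pointwise)

lemma derivation_closed: "derivation R D \<Longrightarrow> x \<in> carrier R \<Longrightarrow> D x \<in> carrier R"
  unfolding derivation_def by auto

lemma derivation_add:
  "derivation R D \<Longrightarrow> x \<in> carrier R \<Longrightarrow> y \<in> carrier R \<Longrightarrow> D (x \<oplus>\<^bsub>R\<^esub> y) = D x \<oplus>\<^bsub>R\<^esub> D y"
  unfolding derivation_def by auto

lemma derivation_mult:
  "derivation R D \<Longrightarrow> x \<in> carrier R \<Longrightarrow> y \<in> carrier R \<Longrightarrow>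
    D (x \<otimes>\<^bsub>R\<^esub> y) = D x \<otimes>\<^bsub>R\<^esub> y \<oplus>\<^bsub>R\<^esub> x \<otimes>\<^bsub>R\<^esub> D y"
  unfolding derivation_def by auto

context cring
begin

lemma finsum_swap:
  assumes "finite I" "finite J" "\<And>i j. i \<in> I \<Longrightarrow> j \<in> J \<Longrightarrow> F i j \<in> carrier R"
  shows "(\<Oplus>i\<in>I. \<Oplus>j\<in>J. F i j) = (\<Oplus>j\<in>J. \<Oplus>i\<in>I. F i j)"
  using assms(1,3)
proof (induction I rule: finite_induct)
  case empty then show ?case using assms(2) by (simp add: finsum_zero)
next
  case (insert x I)
  have "(\<Oplus>i\<in>insert x I. \<Oplus>j\<in>J. F i j) = (\<Oplus>j\<in>J. F x j) \<oplus> (\<Oplus>i\<in>I. \<Oplus>j\<in>J. F i j)"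
    using insert by (intro finsum_insert) (auto intro!: finsum_closed)
  also have "\<dots> = (\<Oplus>j\<in>J. F x j) \<oplus> (\<Oplus>j\<in>J. \<Oplus>i\<in>I. F i j)"
    using insert by simp
  also have "\<dots> = (\<Oplus>j\<in>J. F x j \<oplus> (\<Oplus>i\<in>I. F i j))"
    using insert by (intro finsum_addf[symmetric]) (auto intro!: finsum_closed)
  also have "\<dots> = (\<Oplus>j\<in>J. \<Oplus>i\<in>insert x I. F i j)"
    using insert by (intro finsum_cong_pointwise finsum_insert[symmetric]) auto
  finally show ?case .
qed

lemma finsum_delta:
  assumes "finite I" "j \<in> I" "\<And>i. i \<in> I \<Longrightarrow> f i \<in> carrier R"
  shows "(\<Oplus>i\<in>I. if i = j then f i else \<zero>) = f j"
  using add.finprod_singleton_swap[of j I f] assms by auto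

lemma finsum_ldistr':
  "\<lbrakk> finite A; a \<in> carrier R; \<And>i. i \<in> A \<Longrightarrow> f i \<in> carrier R \<rbrakk> \<Longrightarrow>
    (\<Oplus> i \<in> A. (f i)) \<otimes> a = (\<Oplus> i \<in> A. ((f i) \<otimes> a))"
  by (rule finsum_ldistr) auto

lemma finsum_rdistr':
  "\<lbrakk> finite A; a \<in> carrier R; \<And>i. i \<in> A \<Longrightarrow> f i \<in> carrier R \<rbrakk> \<Longrightarrow>
    a \<otimes> (\<Oplus> i \<in> A. (f i)) = (\<Oplus> i \<in> A. (a \<otimes> (f i)))"
  by (rule finsum_rdistr) auto

lemma finsum_addf':
  "\<lbrakk> \<And>i. i \<in> A \<Longrightarrow> f i \<in> carrier R; \<And>i. i \<in> A \<Longrightarrow> g i \<in> carrier R \<rbrakk> \<Longrightarrow>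
    (\<Oplus> i \<in> A. f i \<oplus> g i) = (\<Oplus> i \<in> A. f i) \<oplus> (\<Oplus> i \<in> A. g i)"
  by (rule finsum_addf) auto

lemma finsum_closed':
  "\<lbrakk> \<And>i. i \<in> A \<Longrightarrow> f i \<in> carrier R \<rbrakk> \<Longrightarrow> (\<Oplus> i \<in> A. f i) \<in> carrier R"
  by (rule finsum_closed) auto

lemma mult_finsum_mult:
  assumes "finite I" "x \<in> carrier R" "z \<in> carrier R" "\<And>j. j \<in> I \<Longrightarrow> f j \<in> carrier R"
  shows "(x \<otimes> (\<Oplus>j\<in>I. f j)) \<otimes> z = (\<Oplus>j\<in>I. (x \<otimes> f j) \<otimes> z)"
  using assms by (simp add: finsum_rdistr' finsum_ldistr' finsum_closed')

lemma finsum_mult_mult: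
  assumes "finite I" "x \<in> carrier R" "z \<in> carrier R" "\<And>j. j \<in> I \<Longrightarrow> f j \<in> carrier R"
  shows "((\<Oplus>j\<in>I. f j) \<otimes> x) \<otimes> z = (\<Oplus>j\<in>I. (f j \<otimes> x) \<otimes> z)"
  using assms by (simp add: finsum_ldistr' finsum_closed')

lemma double_finsum_addf:
  assumes "finite I" "finite J"
    "\<And>i j. i \<in> I \<Longrightarrow> j \<in> J \<Longrightarrow> F i j \<in> carrier R" "\<And>i j. i \<in> I \<Longrightarrow> j \<in> J \<Longrightarrow> G i j \<in> carrier R"
  shows "(\<Oplus>i\<in>I. \<Oplus>j\<in>J. F i j \<oplus> G i j) = (\<Oplus>i\<in>I. \<Oplus>j\<in>J. F i j) \<oplus> (\<Oplus>i\<in>I. \<Oplus>j\<in>J. G i j)"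
  using assms by (simp add: finsum_addf' finsum_closed' cong: finsum_cong_simp)

lemma deriv_zero:
  assumes "derivation R D" shows "D \<zero> = \<zero>"
proof -
  have "D \<zero> = D \<zero> \<oplus> D \<zero>"
    using derivation_add[OF assms, of \<zero> \<zero>] by simp
  then show ?thesis using derivation_closed[OF assms zero_closed]
    by (metis add.l_cancel_one r_zero zero_closed)
qed

lemma deriv_one:
  assumes "derivation R D" shows "D \<one> = \<zero>"
proof -
  have "D \<one> = D \<one> \<oplus> D \<one>"
    using derivation_mult[OF assms, of \<one> \<one>] derivation_closed[OF assms one_closed] by simp
  then show ?thesis using derivation_closed[OF assms one_closed]
    by (metis add.l_cancel_one r_zero zero_closed)
qed

lemma deriv_finsum:
  assumes "derivation R D" "finite I" "\<And>i. i \<in> I \<Longrightarrow> f i \<in> carrier R"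
  shows "D (\<Oplus>i\<in>I. f i) = (\<Oplus>i\<in>I. D (f i))"
  using assms(2,3)
proof (induction I rule: finite_induct)
  case empty then show ?case using deriv_zero[OF assms(1)] by simp
next
  case (insert x I)
  have "D (\<Oplus>i\<in>insert x I. f i) = D (f x \<oplus> (\<Oplus>i\<in>I. f i))"
    using insert by (subst finsum_insert) (auto intro!: finsum_closed)
  also have "\<dots> = D (f x) \<oplus> D (\<Oplus>i\<in>I. f i)"
    using insert by (intro derivation_add assms(1)) (auto intro!: finsum_closed')
  also have "\<dots> = (\<Oplus>i\<in>insert x I. D (f i))"
    using insert derivation_closed[OF assms(1)] by (subst finsum_insert) (auto intro!: finsum_closed)
  finally show ?case .
qed

lemma add_minus_cancel: "x \<in> carrier R \<Longrightarrow> y \<in> carrier R \<Longrightarrow> (x \<oplus> y) \<ominus> y = x"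
  by (simp add: a_minus_def a_assoc r_neg)

lemma minus_add_cancel: "x \<in> carrier R \<Longrightarrow> y \<in> carrier R \<Longrightarrow> (x \<ominus> y) \<oplus> y = x"
  by (simp add: a_minus_def a_assoc l_neg)

lemma add_minus_add:
  "\<lbrakk> p \<in> carrier R; q \<in> carrier R; r \<in> carrier R; s \<in> carrier R \<rbrakk> \<Longrightarrow>
    (p \<oplus> q) \<ominus> (r \<oplus> s) = (p \<ominus> r) \<oplus> (q \<ominus> s)"
  by algebra

lemma eq_add_iff_minus_eq:
  "x \<in> carrier R \<Longrightarrow> y \<in> carrier R \<Longrightarrow> z \<in> carrier R \<Longrightarrow> z = x \<oplus> y \<longleftrightarrow> x = z \<ominus> y"
  by (auto simp: add_minus_cancel minus_add_cancel)

lemma eq_minus_of_add_eq: "x \<in> carrier R \<Longrightarrow> y \<in> carrier R \<Longrightarrow> x \<oplus> y = z \<Longrightarrow> x = z \<ominus> y"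
  by (drule sym) (simp add: add_minus_cancel)

end

section \<open>Dual numbers\<close>

definition dual_numbers :: "('r, 'm) ring_scheme \<Rightarrow> ('r \<times> 'r) ring" where
  "dual_numbers R = \<lparr> carrier = carrier R \<times> carrier R,
     mult = (\<lambda>p q. (fst p \<otimes>\<^bsub>R\<^esub> fst q, fst p \<otimes>\<^bsub>R\<^esub> snd q \<oplus>\<^bsub>R\<^esub> snd p \<otimes>\<^bsub>R\<^esub> fst q)),
     one = (\<one>\<^bsub>R\<^esub>, \<zero>\<^bsub>R\<^esub>),
     zero = (\<zero>\<^bsub>R\<^esub>, \<zero>\<^bsub>R\<^esub>),
     add = (\<lambda>p q. (fst p \<oplus>\<^bsub>R\<^esub> fst q, snd p \<oplus>\<^bsub>R\<^esub> snd q)) \<rparr>"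

lemma dual_numbers_simps:
  "carrier (dual_numbers R) = carrier R \<times> carrier R"
  "mult (dual_numbers R) p q = (fst p \<otimes>\<^bsub>R\<^esub> fst q, fst p \<otimes>\<^bsub>R\<^esub> snd q \<oplus>\<^bsub>R\<^esub> snd p \<otimes>\<^bsub>R\<^esub> fst q)"
  "one (dual_numbers R) = (\<one>\<^bsub>R\<^esub>, \<zero>\<^bsub>R\<^esub>)"
  "zero (dual_numbers R) = (\<zero>\<^bsub>R\<^esub>, \<zero>\<^bsub>R\<^esub>)"
  "add (dual_numbers R) p q = (fst p \<oplus>\<^bsub>R\<^esub> fst q, snd p \<oplus>\<^bsub>R\<^esub> snd q)"
  by (simp_all add: dual_numbers_def)

context cring
begin

lemma cring_dual_numbers: "cring (dual_numbers R)"
proof (rule cringI)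
  show "abelian_group (dual_numbers R)"
  proof (rule abelian_groupI)
    fix x assume x: "x \<in> carrier (dual_numbers R)"
    show "\<exists>y\<in>carrier (dual_numbers R). y \<oplus>\<^bsub>dual_numbers R\<^esub> x = \<zero>\<^bsub>dual_numbers R\<^esub>"
      using x by (intro bexI[of _ "(\<ominus> fst x, \<ominus> snd x)"]) (auto simp: dual_numbers_simps l_neg)
  qed (auto simp: dual_numbers_simps a_ac)
  show "comm_monoid (dual_numbers R)"
    by (rule comm_monoidI) (auto simp: dual_numbers_simps m_ac l_distr r_distr a_ac)
  fix x y z
  assume "x \<in> carrier (dual_numbers R)" "y \<in> carrier (dual_numbers R)" "z \<in> carrier (dual_numbers R)"
  then show "(x \<oplus>\<^bsub>dual_numbers R\<^esub> y) \<otimes>\<^bsub>dual_numbers R\<^esub> z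
      = x \<otimes>\<^bsub>dual_numbers R\<^esub> z \<oplus>\<^bsub>dual_numbers R\<^esub> y \<otimes>\<^bsub>dual_numbers R\<^esub> z"
    by (auto simp: dual_numbers_simps l_distr r_distr a_ac)
qed

lemma finsum_dual_numbers:
  assumes "finite S" "\<And>i. i \<in> S \<Longrightarrow> F i \<in> carrier R \<times> carrier R"
  shows "finsum (dual_numbers R) F S = (\<Oplus>i\<in>S. fst (F i), \<Oplus>i\<in>S. snd (F i))"
  using assms
proof (induction S rule: finite_induct)
  case empty
  interpret DR: cring "dual_numbers R" by (rule cring_dual_numbers)
  show ?case by (simp add: dual_numbers_simps)
next
  case (insert x S)
  interpret DR: cring "dual_numbers R" by (rule cring_dual_numbers)
  have "finsum (dual_numbers R) F (insert x S) = F x \<oplus>\<^bsub>dual_numbers R\<^esub> finsum (dual_numbers R) F S"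
    using insert by (intro DR.finsum_insert) (auto simp: dual_numbers_simps)
  also have "\<dots> = (\<Oplus>i\<in>insert x S. fst (F i), \<Oplus>i\<in>insert x S. snd (F i))"
    using insert by (simp add: dual_numbers_simps finsum_insert mem_Times_iff)
  finally show ?case .
qed

lemma dual_numbers_hom_of_derivation:
  assumes D: "derivation R D"
  shows "(\<lambda>x. (x, D x)) \<in> ring_hom R (dual_numbers R)"
  by (rule ring_hom_memI)
    (auto simp: dual_numbers_simps derivation_closed[OF D] derivation_add[OF D]
      derivation_mult[OF D] deriv_one[OF D] a_comm)

lemma derivation_of_dual_numbers_hom:
  assumes g: "g \<in> ring_hom R (dual_numbers R)" and fst_g: "\<And>x. x \<in> carrier R \<Longrightarrow> fst (g x) = x"
  shows "derivation R (\<lambda>x. snd (g x))"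
proof -
  have closed: "snd (g x) \<in> carrier R" if "x \<in> carrier R" for x
    using ring_hom_closed[OF g that] by (auto simp: dual_numbers_simps mem_Times_iff)
  show ?thesis
    unfolding derivation_def
  proof (intro conjI ballI)
    fix x y assume xy: "x \<in> carrier R" "y \<in> carrier R"
    show "snd (g (x \<oplus> y)) = snd (g x) \<oplus> snd (g y)"
      using ring_hom_add[OF g xy] by (simp add: dual_numbers_simps)
    show "snd (g (x \<otimes> y)) = snd (g x) \<otimes> y \<oplus> x \<otimes> snd (g y)"
      using ring_hom_mult[OF g xy] xy closed by (simp add: dual_numbers_simps fst_g a_comm)
  qed (use closed in auto)
qed

end


section \<open>Coordinates in a free algebra of finite rank\<close>

locale free_algebra =
  fixes A :: "'a ring" and B :: "'b ring" and phi :: "'a \<Rightarrow> 'b" and es :: "'b list"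
  assumes cA: "cring A" and cB: "cring B" and phi: "phi \<in> ring_hom A B"
    and basis: "is_basis A B phi es"
begin

sublocale A: cring A by (rule cA)
sublocale B: cring B by (rule cB)
sublocale ph: ring_hom_cring A B phi by unfold_locales (rule phi)

abbreviation "n \<equiv> length es"
abbreviation "coord \<equiv> coords A B phi es"
abbreviation "sconst i j \<equiv> coord (es!i \<otimes>\<^bsub>B\<^esub> es!j)"

lemma es_closed [simp]: "k < n \<Longrightarrow> es!k \<in> carrier B"
  using basis unfolding is_basis_def by auto

lemma coord_spec:
  assumes "b \<in> carrier B"
  shows "coord b \<in> {..<n} \<rightarrow>\<^sub>E carrier A \<and> b = (\<Oplus>\<^bsub>B\<^esub>k\<in>{..<n}. phi (coord b k) \<otimes>\<^bsub>B\<^esub> es!k)"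
proof -
  from basis assms have ex1: "\<exists>!c. c \<in> {..<n} \<rightarrow>\<^sub>E carrier A \<and>
         b = finsum B (\<lambda>k. phi (c k) \<otimes>\<^bsub>B\<^esub> es ! k) {..<n}"
    unfolding is_basis_def by blast
  show ?thesis unfolding coords_def by (rule theI'[OF ex1])
qed

lemma coord_closed [simp]: "b \<in> carrier B \<Longrightarrow> k < n \<Longrightarrow> coord b k \<in> carrier A"
  using coord_spec[of b] by auto

lemma coord_repr: "b \<in> carrier B \<Longrightarrow> b = (\<Oplus>\<^bsub>B\<^esub>k\<in>{..<n}. phi (coord b k) \<otimes>\<^bsub>B\<^esub> es!k)"
  using coord_spec by blast

lemma coord_unique:
  assumes "c \<in> {..<n} \<rightarrow>\<^sub>E carrier A" "b = (\<Oplus>\<^bsub>B\<^esub>k\<in>{..<n}. phi (c k) \<otimes>\<^bsub>B\<^esub> es!k)"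
  shows "coord b = c"
proof -
  have bc: "b \<in> carrier B" using assms
    by (auto intro!: B.finsum_closed' simp: PiE_def Pi_def)
  from basis bc have u: "\<exists>!c. c \<in> {..<n} \<rightarrow>\<^sub>E carrier A \<and>
         b = finsum B (\<lambda>k. phi (c k) \<otimes>\<^bsub>B\<^esub> es ! k) {..<n}"
    unfolding is_basis_def by blast
  show ?thesis using coord_spec[OF bc] assms u by blast
qed

lemma coord_eqI:
  assumes "\<And>k. k < n \<Longrightarrow> c k \<in> carrier A" "b = (\<Oplus>\<^bsub>B\<^esub>k\<in>{..<n}. phi (c k) \<otimes>\<^bsub>B\<^esub> es!k)"
    "k < n"
  shows "coord b k = c k"
proof -
  have "coord b = restrict c {..<n}"
    apply (rule coord_unique)
    using assms(1) apply auto[1]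
    using assms(2) by (auto intro!: finsum_cong_pointwise)
  then show ?thesis using assms(3) by simp
qed

lemma coord_basis:
  assumes "j < n" "k < n"
  shows "coord (es!j) k = (if k = j then \<one>\<^bsub>A\<^esub> else \<zero>\<^bsub>A\<^esub>)"
proof (rule coord_eqI)
  show "es!j = (\<Oplus>\<^bsub>B\<^esub>k\<in>{..<n}. phi (if k = j then \<one>\<^bsub>A\<^esub> else \<zero>\<^bsub>A\<^esub>) \<otimes>\<^bsub>B\<^esub> es!k)"
  proof -
    have "(\<Oplus>\<^bsub>B\<^esub>k\<in>{..<n}. phi (if k = j then \<one>\<^bsub>A\<^esub> else \<zero>\<^bsub>A\<^esub>) \<otimes>\<^bsub>B\<^esub> es!k)
        = (\<Oplus>\<^bsub>B\<^esub>k\<in>{..<n}. if k = j then es!k else \<zero>\<^bsub>B\<^esub>)"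
      by (rule finsum_cong_pointwise) auto
    also have "\<dots> = es!j" using assms by (intro B.finsum_delta) auto
    finally show ?thesis by simp
  qed
qed (use assms in auto)

lemma coord_add:
  assumes "b \<in> carrier B" "b' \<in> carrier B" "k < n"
  shows "coord (b \<oplus>\<^bsub>B\<^esub> b') k = coord b k \<oplus>\<^bsub>A\<^esub> coord b' k"
proof (rule coord_eqI[OF _ _ assms(3)])
  have "b \<oplus>\<^bsub>B\<^esub> b' = (\<Oplus>\<^bsub>B\<^esub>k\<in>{..<n}. phi (coord b k) \<otimes>\<^bsub>B\<^esub> es!k)
      \<oplus>\<^bsub>B\<^esub> (\<Oplus>\<^bsub>B\<^esub>k\<in>{..<n}. phi (coord b' k) \<otimes>\<^bsub>B\<^esub> es!k)"
    using coord_repr assms by auto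
  also have "\<dots> = (\<Oplus>\<^bsub>B\<^esub>k\<in>{..<n}. phi (coord b k) \<otimes>\<^bsub>B\<^esub> es!k \<oplus>\<^bsub>B\<^esub> phi (coord b' k) \<otimes>\<^bsub>B\<^esub> es!k)"
    using assms by (intro B.finsum_addf'[symmetric]) auto
  also have "\<dots> = (\<Oplus>\<^bsub>B\<^esub>k\<in>{..<n}. phi (coord b k \<oplus>\<^bsub>A\<^esub> coord b' k) \<otimes>\<^bsub>B\<^esub> es!k)"
    using assms by (intro finsum_cong_pointwise) (auto simp: B.l_distr)
  finally show "b \<oplus>\<^bsub>B\<^esub> b' = (\<Oplus>\<^bsub>B\<^esub>k\<in>{..<n}. phi (coord b k \<oplus>\<^bsub>A\<^esub> coord b' k) \<otimes>\<^bsub>B\<^esub> es!k)" .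
qed (use assms in auto)

lemma coord_zero:
  assumes "k < n" shows "coord \<zero>\<^bsub>B\<^esub> k = \<zero>\<^bsub>A\<^esub>"
proof (rule coord_eqI[OF _ _ assms])
  show "\<zero>\<^bsub>B\<^esub> = (\<Oplus>\<^bsub>B\<^esub>k\<in>{..<n}. phi \<zero>\<^bsub>A\<^esub> \<otimes>\<^bsub>B\<^esub> es!k)"
  proof -
    have "(\<Oplus>\<^bsub>B\<^esub>k\<in>{..<n}. phi \<zero>\<^bsub>A\<^esub> \<otimes>\<^bsub>B\<^esub> es!k) = (\<Oplus>\<^bsub>B\<^esub>k\<in>{..<n}. \<zero>\<^bsub>B\<^esub>)"
      by (intro finsum_cong_pointwise) auto
    then show ?thesis by (simp add: B.finsum_zero)
  qed
qed auto

lemma coord_smult: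
  assumes a: "a \<in> carrier A" and b: "b \<in> carrier B" and k: "k < n"
  shows "coord (phi a \<otimes>\<^bsub>B\<^esub> b) k = a \<otimes>\<^bsub>A\<^esub> coord b k"
proof (rule coord_eqI[OF _ _ k])
  have "phi a \<otimes>\<^bsub>B\<^esub> b = phi a \<otimes>\<^bsub>B\<^esub> (\<Oplus>\<^bsub>B\<^esub>k\<in>{..<n}. phi (coord b k) \<otimes>\<^bsub>B\<^esub> es!k)"
    using b coord_repr by simp
  also have "\<dots> = (\<Oplus>\<^bsub>B\<^esub>k\<in>{..<n}. phi a \<otimes>\<^bsub>B\<^esub> (phi (coord b k) \<otimes>\<^bsub>B\<^esub> es!k))"
    using a b by (intro B.finsum_rdistr') auto
  also have "\<dots> = (\<Oplus>\<^bsub>B\<^esub>k\<in>{..<n}. phi (a \<otimes>\<^bsub>A\<^esub> coord b k) \<otimes>\<^bsub>B\<^esub> es!k)"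
    using a b by (intro finsum_cong_pointwise) (auto simp: B.m_assoc)
  finally show "phi a \<otimes>\<^bsub>B\<^esub> b = (\<Oplus>\<^bsub>B\<^esub>k\<in>{..<n}. phi (a \<otimes>\<^bsub>A\<^esub> coord b k) \<otimes>\<^bsub>B\<^esub> es!k)" .
qed (use a b in auto)

lemma coord_finsum:
  assumes "finite I" "\<And>i. i \<in> I \<Longrightarrow> f i \<in> carrier B" and k: "k < n"
  shows "coord (\<Oplus>\<^bsub>B\<^esub>i\<in>I. f i) k = (\<Oplus>\<^bsub>A\<^esub>i\<in>I. coord (f i) k)"
  using assms(1,2)
proof (induction I rule: finite_induct)
  case empty
  then show ?case using coord_zero[OF k] by simp
next
  case (insert x I)
  then show ?case
    using k by (simp add: B.finsum_insert A.finsum_insert B.finsum_closed' coord_add Pi_def)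
qed

lemma coord_lincomb:
  assumes "finite I" "\<And>i. i \<in> I \<Longrightarrow> x i \<in> carrier A" "\<And>i. i \<in> I \<Longrightarrow> f i \<in> carrier B" "k < n"
  shows "coord (\<Oplus>\<^bsub>B\<^esub>i\<in>I. phi (x i) \<otimes>\<^bsub>B\<^esub> f i) k = (\<Oplus>\<^bsub>A\<^esub>i\<in>I. x i \<otimes>\<^bsub>A\<^esub> coord (f i) k)"
  using assms by (simp add: coord_finsum coord_smult cong: finsum_cong_simp)

lemma mult_repr:
  assumes b: "b \<in> carrier B" and b': "b' \<in> carrier B"
  shows "b \<otimes>\<^bsub>B\<^esub> b' = (\<Oplus>\<^bsub>B\<^esub>i\<in>{..<n}. \<Oplus>\<^bsub>B\<^esub>j\<in>{..<n}.
      phi (coord b i \<otimes>\<^bsub>A\<^esub> coord b' j) \<otimes>\<^bsub>B\<^esub> (es!i \<otimes>\<^bsub>B\<^esub> es!j))"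
proof -
  have "b \<otimes>\<^bsub>B\<^esub> b' = (\<Oplus>\<^bsub>B\<^esub>i\<in>{..<n}. phi (coord b i) \<otimes>\<^bsub>B\<^esub> es!i)
      \<otimes>\<^bsub>B\<^esub> (\<Oplus>\<^bsub>B\<^esub>j\<in>{..<n}. phi (coord b' j) \<otimes>\<^bsub>B\<^esub> es!j)"
    using coord_repr assms by auto
  also have "\<dots> = (\<Oplus>\<^bsub>B\<^esub>i\<in>{..<n}. (phi (coord b i) \<otimes>\<^bsub>B\<^esub> es!i)
      \<otimes>\<^bsub>B\<^esub> (\<Oplus>\<^bsub>B\<^esub>j\<in>{..<n}. phi (coord b' j) \<otimes>\<^bsub>B\<^esub> es!j))"
    using assms by (intro B.finsum_ldistr') (auto intro!: B.finsum_closed')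
  also have "\<dots> = (\<Oplus>\<^bsub>B\<^esub>i\<in>{..<n}. \<Oplus>\<^bsub>B\<^esub>j\<in>{..<n}.
      (phi (coord b i) \<otimes>\<^bsub>B\<^esub> es!i) \<otimes>\<^bsub>B\<^esub> (phi (coord b' j) \<otimes>\<^bsub>B\<^esub> es!j))"
    using assms by (intro finsum_cong_pointwise B.finsum_rdistr') auto
  also have "\<dots> = (\<Oplus>\<^bsub>B\<^esub>i\<in>{..<n}. \<Oplus>\<^bsub>B\<^esub>j\<in>{..<n}.
      phi (coord b i \<otimes>\<^bsub>A\<^esub> coord b' j) \<otimes>\<^bsub>B\<^esub> (es!i \<otimes>\<^bsub>B\<^esub> es!j))"
    using assms by (intro finsum_cong_pointwise) (simp add: B.m_ac)
  finally show ?thesis .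
qed

lemma coord_mult:
  assumes b: "b \<in> carrier B" and b': "b' \<in> carrier B" and k: "k < n"
  shows "coord (b \<otimes>\<^bsub>B\<^esub> b') k =
     (\<Oplus>\<^bsub>A\<^esub>i\<in>{..<n}. \<Oplus>\<^bsub>A\<^esub>j\<in>{..<n}. (coord b i \<otimes>\<^bsub>A\<^esub> coord b' j) \<otimes>\<^bsub>A\<^esub> sconst i j k)"
proof -
  have "coord (b \<otimes>\<^bsub>B\<^esub> b') k = (\<Oplus>\<^bsub>A\<^esub>i\<in>{..<n}. coord (\<Oplus>\<^bsub>B\<^esub>j\<in>{..<n}.
      phi (coord b i \<otimes>\<^bsub>A\<^esub> coord b' j) \<otimes>\<^bsub>B\<^esub> (es!i \<otimes>\<^bsub>B\<^esub> es!j)) k)"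
    unfolding mult_repr[OF b b'] using assms
    by (intro coord_finsum) (auto intro!: B.finsum_closed' simp del: ph.hom_mult)
  also have "\<dots> = (\<Oplus>\<^bsub>A\<^esub>i\<in>{..<n}. \<Oplus>\<^bsub>A\<^esub>j\<in>{..<n}. (coord b i \<otimes>\<^bsub>A\<^esub> coord b' j) \<otimes>\<^bsub>A\<^esub> sconst i j k)"
    using assms by (intro finsum_cong_pointwise coord_lincomb) auto
  finally show ?thesis .
qed

lemma coord_mult_basis:
  assumes b: "b \<in> carrier B" and m: "m < n" and k: "k < n"
  shows "coord (b \<otimes>\<^bsub>B\<^esub> es!m) k = (\<Oplus>\<^bsub>A\<^esub>i\<in>{..<n}. coord b i \<otimes>\<^bsub>A\<^esub> sconst i m k)"
proof -
  have "b \<otimes>\<^bsub>B\<^esub> es!m = (\<Oplus>\<^bsub>B\<^esub>i\<in>{..<n}. phi (coord b i) \<otimes>\<^bsub>B\<^esub> es!i) \<otimes>\<^bsub>B\<^esub> es!m"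
    using coord_repr[OF b] by (rule arg_cong)
  also have "\<dots> = (\<Oplus>\<^bsub>B\<^esub>i\<in>{..<n}. (phi (coord b i) \<otimes>\<^bsub>B\<^esub> es!i) \<otimes>\<^bsub>B\<^esub> es!m)"
    using assms by (intro B.finsum_ldistr') auto
  also have "\<dots> = (\<Oplus>\<^bsub>B\<^esub>i\<in>{..<n}. phi (coord b i) \<otimes>\<^bsub>B\<^esub> (es!i \<otimes>\<^bsub>B\<^esub> es!m))"
    using assms by (intro finsum_cong_pointwise) (simp add: B.m_assoc)
  finally have "coord (b \<otimes>\<^bsub>B\<^esub> es!m) k
      = coord (\<Oplus>\<^bsub>B\<^esub>i\<in>{..<n}. phi (coord b i) \<otimes>\<^bsub>B\<^esub> (es!i \<otimes>\<^bsub>B\<^esub> es!m)) k"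
    by simp
  also have "\<dots> = (\<Oplus>\<^bsub>A\<^esub>i\<in>{..<n}. coord b i \<otimes>\<^bsub>A\<^esub> sconst i m k)"
    using assms by (intro coord_lincomb) auto
  finally show ?thesis .
qed

lemma coord_basis_mult:
  assumes b: "b \<in> carrier B" and m: "m < n" and k: "k < n"
  shows "coord (es!m \<otimes>\<^bsub>B\<^esub> b) k = (\<Oplus>\<^bsub>A\<^esub>j\<in>{..<n}. coord b j \<otimes>\<^bsub>A\<^esub> sconst m j k)"
proof -
  have "sconst i m k = sconst m i k" if "i < n" for i
    using that m by (simp add: B.m_comm)
  then show ?thesis
    using coord_mult_basis[OF b m k] assms by (simp add: B.m_comm cong: finsum_cong_simp)
qed

context
  fixes d delta
  assumes d: "derivation A d" and delta: "derivation B delta"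
    and compat: "\<And>a. a \<in> carrier A \<Longrightarrow> delta (phi a) = phi (d a)"
begin

declare derivation_closed[OF d, simp] derivation_closed[OF delta, simp]

lemma coord_deriv:
  assumes b: "b \<in> carrier B" and k: "k < n"
  shows "coord (delta b) k
    = d (coord b k) \<oplus>\<^bsub>A\<^esub> (\<Oplus>\<^bsub>A\<^esub>j\<in>{..<n}. coord b j \<otimes>\<^bsub>A\<^esub> coord (delta (es!j)) k)"
proof -
  have "delta b = delta (\<Oplus>\<^bsub>B\<^esub>j\<in>{..<n}. phi (coord b j) \<otimes>\<^bsub>B\<^esub> es!j)"
    using coord_repr[OF b] by (rule arg_cong)
  also have "\<dots> = (\<Oplus>\<^bsub>B\<^esub>j\<in>{..<n}. delta (phi (coord b j) \<otimes>\<^bsub>B\<^esub> es!j))"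
    using b by (intro B.deriv_finsum delta) auto
  also have "\<dots> = (\<Oplus>\<^bsub>B\<^esub>j\<in>{..<n}. phi (d (coord b j)) \<otimes>\<^bsub>B\<^esub> es!j \<oplus>\<^bsub>B\<^esub> phi (coord b j) \<otimes>\<^bsub>B\<^esub> delta (es!j))"
    using b by (intro finsum_cong_pointwise) (simp add: derivation_mult[OF delta] compat)
  also have "\<dots> = (\<Oplus>\<^bsub>B\<^esub>j\<in>{..<n}. phi (d (coord b j)) \<otimes>\<^bsub>B\<^esub> es!j)
      \<oplus>\<^bsub>B\<^esub> (\<Oplus>\<^bsub>B\<^esub>j\<in>{..<n}. phi (coord b j) \<otimes>\<^bsub>B\<^esub> delta (es!j))"
    using b by (intro B.finsum_addf') auto
  finally have "coord (delta b) k = coord (\<Oplus>\<^bsub>B\<^esub>j\<in>{..<n}. phi (d (coord b j)) \<otimes>\<^bsub>B\<^esub> es!j) k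
      \<oplus>\<^bsub>A\<^esub> coord (\<Oplus>\<^bsub>B\<^esub>j\<in>{..<n}. phi (coord b j) \<otimes>\<^bsub>B\<^esub> delta (es!j)) k"
    using b k by (simp add: coord_add B.finsum_closed')
  moreover have "coord (\<Oplus>\<^bsub>B\<^esub>j\<in>{..<n}. phi (d (coord b j)) \<otimes>\<^bsub>B\<^esub> es!j) k = d (coord b k)"
    by (rule coord_eqI) (use b k in auto)
  moreover have "coord (\<Oplus>\<^bsub>B\<^esub>j\<in>{..<n}. phi (coord b j) \<otimes>\<^bsub>B\<^esub> delta (es!j)) k
      = (\<Oplus>\<^bsub>A\<^esub>j\<in>{..<n}. coord b j \<otimes>\<^bsub>A\<^esub> coord (delta (es!j)) k)"
    by (rule coord_lincomb) (use b k in auto)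
  ultimately show ?thesis by simp
qed

lemma deriv_sconst:
  assumes i: "i < n" and j: "j < n" and k: "k < n"
  shows "(\<Oplus>\<^bsub>A\<^esub>l\<in>{..<n}. coord (delta (es!j)) l \<otimes>\<^bsub>A\<^esub> sconst i l k)
      \<oplus>\<^bsub>A\<^esub> (\<Oplus>\<^bsub>A\<^esub>l\<in>{..<n}. coord (delta (es!i)) l \<otimes>\<^bsub>A\<^esub> sconst l j k)
    = d (sconst i j k) \<oplus>\<^bsub>A\<^esub> (\<Oplus>\<^bsub>A\<^esub>m\<in>{..<n}. sconst i j m \<otimes>\<^bsub>A\<^esub> coord (delta (es!m)) k)"
proof -
  have "(\<Oplus>\<^bsub>A\<^esub>l\<in>{..<n}. coord (delta (es!j)) l \<otimes>\<^bsub>A\<^esub> sconst i l k)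
      \<oplus>\<^bsub>A\<^esub> (\<Oplus>\<^bsub>A\<^esub>l\<in>{..<n}. coord (delta (es!i)) l \<otimes>\<^bsub>A\<^esub> sconst l j k)
    = (\<Oplus>\<^bsub>A\<^esub>l\<in>{..<n}. coord (delta (es!i)) l \<otimes>\<^bsub>A\<^esub> sconst l j k)
      \<oplus>\<^bsub>A\<^esub> (\<Oplus>\<^bsub>A\<^esub>l\<in>{..<n}. coord (delta (es!j)) l \<otimes>\<^bsub>A\<^esub> sconst i l k)"
    using assms by (intro A.a_comm A.finsum_closed') auto
  also have "\<dots> = coord (delta (es!i) \<otimes>\<^bsub>B\<^esub> es!j) k \<oplus>\<^bsub>A\<^esub> coord (es!i \<otimes>\<^bsub>B\<^esub> delta (es!j)) k"
    using assms by (simp add: coord_mult_basis coord_basis_mult)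
  also have "\<dots> = coord (delta (es!i \<otimes>\<^bsub>B\<^esub> es!j)) k"
    using assms by (simp add: derivation_mult[OF delta] coord_add)
  also have "\<dots> = d (sconst i j k) \<oplus>\<^bsub>A\<^esub> (\<Oplus>\<^bsub>A\<^esub>m\<in>{..<n}. sconst i j m \<otimes>\<^bsub>A\<^esub> coord (delta (es!m)) k)"
    using assms by (intro coord_deriv) auto
  finally show ?thesis .
qed

end

end


section \<open>The tensor product \<open>W \<otimes>\<^sub>A B\<close>\<close>

locale tensor_setting = free_algebra A B phi es for A :: "'a ring" and B :: "'b ring" and phi es +
  fixes W :: "'w ring" and P :: "'a \<Rightarrow> 'w"
  assumes cW: "cring W" and P: "P \<in> ring_hom A W"
begin

sublocale W: cring W by (rule cW)
sublocale pw: ring_hom_cring A W P by unfold_locales (rule P)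

abbreviation "T \<equiv> tensor A B phi es W P"

lemma T_carrier: "carrier T = {..<n} \<rightarrow>\<^sub>E carrier W"
  by (simp add: tensor_def)
lemma T_mult: "mult T u v = (\<lambda>k\<in>{..<n}. \<Oplus>\<^bsub>W\<^esub>i\<in>{..<n}. \<Oplus>\<^bsub>W\<^esub>j\<in>{..<n}. (u i \<otimes>\<^bsub>W\<^esub> v j) \<otimes>\<^bsub>W\<^esub> P (sconst i j k))"
  by (simp add: tensor_def)
lemma T_add: "add T u v = (\<lambda>k\<in>{..<n}. u k \<oplus>\<^bsub>W\<^esub> v k)"
  by (simp add: tensor_def)
lemma T_one: "one T = (\<lambda>k\<in>{..<n}. P (coord \<one>\<^bsub>B\<^esub> k))"
  by (simp add: tensor_def)
lemma T_zero: "zero T = (\<lambda>k\<in>{..<n}. \<zero>\<^bsub>W\<^esub>)"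
  by (simp add: tensor_def)

lemma vec_closed [simp]: "a \<in> {..<n} \<rightarrow>\<^sub>E carrier W \<Longrightarrow> i < n \<Longrightarrow> a i \<in> carrier W"
  by auto

lemma vec_eqI:
  assumes "a \<in> {..<n} \<rightarrow>\<^sub>E carrier W" "b \<in> {..<n} \<rightarrow>\<^sub>E carrier W" "\<And>k. k < n \<Longrightarrow> a k = b k"
  shows "a = b"
  using assms by (intro PiE_ext[of a "{..<n}" "\<lambda>_. carrier W"]) auto

lemma T_mult_closed [simp]:
  "u \<in> {..<n} \<rightarrow>\<^sub>E carrier W \<Longrightarrow> v \<in> {..<n} \<rightarrow>\<^sub>E carrier W \<Longrightarrow> mult T u v \<in> {..<n} \<rightarrow>\<^sub>E carrier W"
  by (auto simp: T_mult intro!: W.finsum_closed')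

lemma T_add_closed [simp]:
  "u \<in> {..<n} \<rightarrow>\<^sub>E carrier W \<Longrightarrow> v \<in> {..<n} \<rightarrow>\<^sub>E carrier W \<Longrightarrow> add T u v \<in> {..<n} \<rightarrow>\<^sub>E carrier W"
  by (auto simp: T_add)

lemma T_mult_k: "k < n \<Longrightarrow> mult T u v k = (\<Oplus>\<^bsub>W\<^esub>i\<in>{..<n}. \<Oplus>\<^bsub>W\<^esub>j\<in>{..<n}. (u i \<otimes>\<^bsub>W\<^esub> v j) \<otimes>\<^bsub>W\<^esub> P (sconst i j k))"
  by (simp add: T_mult)
lemma T_add_k: "k < n \<Longrightarrow> add T u v k = u k \<oplus>\<^bsub>W\<^esub> v k"
  by (simp add: T_add)

definition pure :: "'w \<Rightarrow> 'b \<Rightarrow> nat \<Rightarrow> 'w" where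
  "pure x b = (\<lambda>k\<in>{..<n}. x \<otimes>\<^bsub>W\<^esub> P (coord b k))"

lemma pure_closed [simp]: "x \<in> carrier W \<Longrightarrow> b \<in> carrier B \<Longrightarrow> pure x b \<in> {..<n} \<rightarrow>\<^sub>E carrier W"
  by (auto simp: pure_def)

lemma pure_k: "k < n \<Longrightarrow> pure x b k = x \<otimes>\<^bsub>W\<^esub> P (coord b k)"
  by (simp add: pure_def)

lemma tensor_inl_pure: "tensor_inl A B phi es W P x = pure x \<one>\<^bsub>B\<^esub>"
  by (simp add: tensor_inl_def pure_def)

lemma tensor_inr_pure: "b \<in> carrier B \<Longrightarrow> tensor_inr A B phi es W P b = pure \<one>\<^bsub>W\<^esub> b"
  by (auto simp: tensor_inr_def pure_def)

lemma tensor_one_pure: "one T = pure \<one>\<^bsub>W\<^esub> \<one>\<^bsub>B\<^esub>"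
  by (auto simp: T_one pure_def)

lemma mult_hom_double_finsum:
  assumes "z \<in> carrier W" "\<And>i j. i < n \<Longrightarrow> j < n \<Longrightarrow> F i j \<in> carrier A"
  shows "(\<Oplus>\<^bsub>W\<^esub>i\<in>{..<n}. \<Oplus>\<^bsub>W\<^esub>j\<in>{..<n}. z \<otimes>\<^bsub>W\<^esub> P (F i j))
    = z \<otimes>\<^bsub>W\<^esub> P (\<Oplus>\<^bsub>A\<^esub>i\<in>{..<n}. \<Oplus>\<^bsub>A\<^esub>j\<in>{..<n}. F i j)"
proof -
  have "P (\<Oplus>\<^bsub>A\<^esub>i\<in>{..<n}. \<Oplus>\<^bsub>A\<^esub>j\<in>{..<n}. F i j) = (\<Oplus>\<^bsub>W\<^esub>i\<in>{..<n}. P (\<Oplus>\<^bsub>A\<^esub>j\<in>{..<n}. F i j))"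
    using assms by (subst pw.hom_finsum) (auto simp: comp_def intro!: A.finsum_closed')
  also have "\<dots> = (\<Oplus>\<^bsub>W\<^esub>i\<in>{..<n}. \<Oplus>\<^bsub>W\<^esub>j\<in>{..<n}. P (F i j))"
    using assms by (intro finsum_cong_pointwise) (subst pw.hom_finsum, auto simp: comp_def)
  finally have "z \<otimes>\<^bsub>W\<^esub> P (\<Oplus>\<^bsub>A\<^esub>i\<in>{..<n}. \<Oplus>\<^bsub>A\<^esub>j\<in>{..<n}. F i j) = z \<otimes>\<^bsub>W\<^esub> (\<Oplus>\<^bsub>W\<^esub>i\<in>{..<n}. \<Oplus>\<^bsub>W\<^esub>j\<in>{..<n}. P (F i j))"
    by simp
  also have "\<dots> = (\<Oplus>\<^bsub>W\<^esub>i\<in>{..<n}. z \<otimes>\<^bsub>W\<^esub> (\<Oplus>\<^bsub>W\<^esub>j\<in>{..<n}. P (F i j)))"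
    using assms by (intro W.finsum_rdistr') (auto intro!: W.finsum_closed')
  also have "\<dots> = (\<Oplus>\<^bsub>W\<^esub>i\<in>{..<n}. \<Oplus>\<^bsub>W\<^esub>j\<in>{..<n}. z \<otimes>\<^bsub>W\<^esub> P (F i j))"
    using assms by (intro finsum_cong_pointwise W.finsum_rdistr') auto
  finally show ?thesis by simp
qed

lemma pure_mult:
  assumes "x \<in> carrier W" "y \<in> carrier W" "b \<in> carrier B" "b' \<in> carrier B"
  shows "mult T (pure x b) (pure y b') = pure (x \<otimes>\<^bsub>W\<^esub> y) (b \<otimes>\<^bsub>B\<^esub> b')"
proof (rule vec_eqI)
  fix k assume k: "k < n"
  have "mult T (pure x b) (pure y b') k = (\<Oplus>\<^bsub>W\<^esub>i\<in>{..<n}. \<Oplus>\<^bsub>W\<^esub>j\<in>{..<n}.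
      (x \<otimes>\<^bsub>W\<^esub> y) \<otimes>\<^bsub>W\<^esub> P ((coord b i \<otimes>\<^bsub>A\<^esub> coord b' j) \<otimes>\<^bsub>A\<^esub> sconst i j k))"
    using assms k by (auto simp: T_mult_k pure_k W.m_ac intro!: finsum_cong_pointwise)
  also have "\<dots> = (x \<otimes>\<^bsub>W\<^esub> y) \<otimes>\<^bsub>W\<^esub> P (coord (b \<otimes>\<^bsub>B\<^esub> b') k)"
    using assms k by (subst mult_hom_double_finsum) (auto simp: coord_mult[of b b' k, symmetric])
  finally show "mult T (pure x b) (pure y b') k = pure (x \<otimes>\<^bsub>W\<^esub> y) (b \<otimes>\<^bsub>B\<^esub> b') k"
    using k by (simp add: pure_k)
qed (use assms in auto)

lemma pure_add_left:
  assumes "x \<in> carrier W" "y \<in> carrier W" "b \<in> carrier B"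
  shows "add T (pure x b) (pure y b) = pure (x \<oplus>\<^bsub>W\<^esub> y) b"
  using assms by (intro vec_eqI) (auto simp: T_add_k pure_k W.l_distr)

lemma pure_add_right:
  assumes "x \<in> carrier W" "b \<in> carrier B" "b' \<in> carrier B"
  shows "add T (pure x b) (pure x b') = pure x (b \<oplus>\<^bsub>B\<^esub> b')"
  using assms by (intro vec_eqI) (auto simp: T_add_k pure_k W.r_distr coord_add)

lemma pure_zero_right: "x \<in> carrier W \<Longrightarrow> pure x \<zero>\<^bsub>B\<^esub> = zero T"
  by (auto simp: pure_def T_zero coord_zero)

lemma pure_zero_left: "b \<in> carrier B \<Longrightarrow> pure \<zero>\<^bsub>W\<^esub> b = zero T"
  by (auto simp: pure_def T_zero)

lemma T_zero_closed [simp]: "zero T \<in> {..<n} \<rightarrow>\<^sub>E carrier W"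
  by (auto simp: T_zero)

lemma T_add_zero: "v \<in> {..<n} \<rightarrow>\<^sub>E carrier W \<Longrightarrow> add T v (zero T) = v"
  by (intro vec_eqI) (auto simp: T_add_k T_zero)

lemma T_zero_add: "v \<in> {..<n} \<rightarrow>\<^sub>E carrier W \<Longrightarrow> add T (zero T) v = v"
  by (intro vec_eqI) (auto simp: T_add_k T_zero)

lemma tensor_inl_hom: "tensor_inl A B phi es W P \<in> ring_hom W T"
proof (rule ring_hom_memI)
  fix x y assume xy: "x \<in> carrier W" "y \<in> carrier W"
  show "tensor_inl A B phi es W P (x \<otimes>\<^bsub>W\<^esub> y) = mult T (tensor_inl A B phi es W P x) (tensor_inl A B phi es W P y)"
    using xy by (simp add: tensor_inl_pure pure_mult)
  show "tensor_inl A B phi es W P (x \<oplus>\<^bsub>W\<^esub> y) = add T (tensor_inl A B phi es W P x) (tensor_inl A B phi es W P y)"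
    using xy by (simp add: tensor_inl_pure pure_add_left)
qed (auto simp: tensor_inl_pure tensor_one_pure T_carrier)

lemma tensor_inr_hom: "tensor_inr A B phi es W P \<in> ring_hom B T"
proof (rule ring_hom_memI)
  fix x y assume xy: "x \<in> carrier B" "y \<in> carrier B"
  show "tensor_inr A B phi es W P (x \<otimes>\<^bsub>B\<^esub> y) = mult T (tensor_inr A B phi es W P x) (tensor_inr A B phi es W P y)"
    using xy by (simp add: tensor_inr_pure pure_mult)
  show "tensor_inr A B phi es W P (x \<oplus>\<^bsub>B\<^esub> y) = add T (tensor_inr A B phi es W P x) (tensor_inr A B phi es W P y)"
    using xy by (simp add: tensor_inr_pure pure_add_right)
qed (auto simp: tensor_inr_pure tensor_one_pure T_carrier)

lemma T_l_distr:
  assumes "a \<in> {..<n} \<rightarrow>\<^sub>E carrier W" "a' \<in> {..<n} \<rightarrow>\<^sub>E carrier W" "b \<in> {..<n} \<rightarrow>\<^sub>E carrier W"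
  shows "mult T (add T a a') b = add T (mult T a b) (mult T a' b)"
proof (rule vec_eqI)
  fix k assume k: "k < n"
  have "mult T (add T a a') b k = (\<Oplus>\<^bsub>W\<^esub>i\<in>{..<n}. \<Oplus>\<^bsub>W\<^esub>j\<in>{..<n}.
     (a i \<otimes>\<^bsub>W\<^esub> b j) \<otimes>\<^bsub>W\<^esub> P (sconst i j k) \<oplus>\<^bsub>W\<^esub> (a' i \<otimes>\<^bsub>W\<^esub> b j) \<otimes>\<^bsub>W\<^esub> P (sconst i j k))"
    using assms k unfolding T_mult_k[OF k] by (intro finsum_cong_pointwise) (simp add: T_add_k W.l_distr)
  also have "\<dots> = (\<Oplus>\<^bsub>W\<^esub>i\<in>{..<n}. (\<Oplus>\<^bsub>W\<^esub>j\<in>{..<n}. (a i \<otimes>\<^bsub>W\<^esub> b j) \<otimes>\<^bsub>W\<^esub> P (sconst i j k))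
       \<oplus>\<^bsub>W\<^esub> (\<Oplus>\<^bsub>W\<^esub>j\<in>{..<n}. (a' i \<otimes>\<^bsub>W\<^esub> b j) \<otimes>\<^bsub>W\<^esub> P (sconst i j k)))"
    using assms k by (intro finsum_cong_pointwise W.finsum_addf') auto
  also have "\<dots> = mult T a b k \<oplus>\<^bsub>W\<^esub> mult T a' b k"
    using assms k by (simp only: T_mult_k, intro W.finsum_addf') (auto intro!: W.finsum_closed')
  finally show "mult T (add T a a') b k = add T (mult T a b) (mult T a' b) k"
    using k by (simp add: T_add_k)
qed (use assms in auto)

lemma T_r_distr:
  assumes "a \<in> {..<n} \<rightarrow>\<^sub>E carrier W" "b \<in> {..<n} \<rightarrow>\<^sub>E carrier W" "b' \<in> {..<n} \<rightarrow>\<^sub>E carrier W"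
  shows "mult T a (add T b b') = add T (mult T a b) (mult T a b')"
proof (rule vec_eqI)
  fix k assume k: "k < n"
  have "mult T a (add T b b') k = (\<Oplus>\<^bsub>W\<^esub>i\<in>{..<n}. \<Oplus>\<^bsub>W\<^esub>j\<in>{..<n}.
     (a i \<otimes>\<^bsub>W\<^esub> b j) \<otimes>\<^bsub>W\<^esub> P (sconst i j k) \<oplus>\<^bsub>W\<^esub> (a i \<otimes>\<^bsub>W\<^esub> b' j) \<otimes>\<^bsub>W\<^esub> P (sconst i j k))"
    using assms k unfolding T_mult_k[OF k] by (intro finsum_cong_pointwise) (simp add: T_add_k W.l_distr W.r_distr)
  also have "\<dots> = (\<Oplus>\<^bsub>W\<^esub>i\<in>{..<n}. (\<Oplus>\<^bsub>W\<^esub>j\<in>{..<n}. (a i \<otimes>\<^bsub>W\<^esub> b j) \<otimes>\<^bsub>W\<^esub> P (sconst i j k))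
       \<oplus>\<^bsub>W\<^esub> (\<Oplus>\<^bsub>W\<^esub>j\<in>{..<n}. (a i \<otimes>\<^bsub>W\<^esub> b' j) \<otimes>\<^bsub>W\<^esub> P (sconst i j k)))"
    using assms k by (intro finsum_cong_pointwise W.finsum_addf') auto
  also have "\<dots> = mult T a b k \<oplus>\<^bsub>W\<^esub> mult T a b' k"
    using assms k by (simp only: T_mult_k, intro W.finsum_addf') (auto intro!: W.finsum_closed')
  finally show "mult T a (add T b b') k = add T (mult T a b) (mult T a b') k"
    using k by (simp add: T_add_k)
qed (use assms in auto)

lemma tensor_map_k: "k < n \<Longrightarrow> tensor_map es h v k = h (v k)"
  by (simp add: tensor_map_def)

lemma tensor_map_mult:
  fixes C :: "'c ring"
  assumes C: "cring C" and h: "h \<in> ring_hom W C" and hP: "\<And>a. a \<in> carrier A \<Longrightarrow> h (P a) = psi a"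
    and v: "v \<in> carrier T" and w: "w \<in> carrier T"
  shows "tensor_map es h (mult T v w) = mult (tensor A B phi es C psi) (tensor_map es h v) (tensor_map es h w)"
proof
  interpret C: cring C by (rule C)
  interpret h: ring_hom_cring W C h by unfold_locales (rule h)
  fix k
  have "h (\<Oplus>\<^bsub>W\<^esub>i\<in>{..<n}. \<Oplus>\<^bsub>W\<^esub>j\<in>{..<n}. (v i \<otimes>\<^bsub>W\<^esub> w j) \<otimes>\<^bsub>W\<^esub> P (sconst i j k))
      = (\<Oplus>\<^bsub>C\<^esub>i\<in>{..<n}. \<Oplus>\<^bsub>C\<^esub>j\<in>{..<n}. (h (v i) \<otimes>\<^bsub>C\<^esub> h (w j)) \<otimes>\<^bsub>C\<^esub> psi (sconst i j k))"
    if k: "k < n"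
  proof -
    have "h (\<Oplus>\<^bsub>W\<^esub>i\<in>{..<n}. \<Oplus>\<^bsub>W\<^esub>j\<in>{..<n}. (v i \<otimes>\<^bsub>W\<^esub> w j) \<otimes>\<^bsub>W\<^esub> P (sconst i j k))
        = (\<Oplus>\<^bsub>C\<^esub>i\<in>{..<n}. h (\<Oplus>\<^bsub>W\<^esub>j\<in>{..<n}. (v i \<otimes>\<^bsub>W\<^esub> w j) \<otimes>\<^bsub>W\<^esub> P (sconst i j k)))"
      using v w k by (subst h.hom_finsum) (auto simp: T_carrier comp_def intro!: W.finsum_closed')
    also have "\<dots> = (\<Oplus>\<^bsub>C\<^esub>i\<in>{..<n}. \<Oplus>\<^bsub>C\<^esub>j\<in>{..<n}. h ((v i \<otimes>\<^bsub>W\<^esub> w j) \<otimes>\<^bsub>W\<^esub> P (sconst i j k)))"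
      using v w k by (intro finsum_cong_pointwise) (auto simp: T_carrier comp_def)
    also have "\<dots> = (\<Oplus>\<^bsub>C\<^esub>i\<in>{..<n}. \<Oplus>\<^bsub>C\<^esub>j\<in>{..<n}. (h (v i) \<otimes>\<^bsub>C\<^esub> h (w j)) \<otimes>\<^bsub>C\<^esub> psi (sconst i j k))"
      using v w k by (intro finsum_cong_pointwise) (auto simp: T_carrier hP)
    finally show ?thesis .
  qed
  then show "tensor_map es h (mult T v w) k
      = mult (tensor A B phi es C psi) (tensor_map es h v) (tensor_map es h w) k"
    by (auto simp: tensor_map_def T_mult tensor_def intro!: finsum_cong_pointwise)
qed

lemma tensor_map_hom:
  fixes C :: "'c ring"
  assumes C: "cring C" and h: "h \<in> ring_hom W C" and hP: "\<And>a. a \<in> carrier A \<Longrightarrow> h (P a) = psi a"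
  shows "tensor_map es h \<in> ring_hom T (tensor A B phi es C psi)"
proof (rule ring_hom_memI)
  fix v w assume v: "v \<in> carrier T" and w: "w \<in> carrier T"
  show "tensor_map es h (mult T v w) = mult (tensor A B phi es C psi) (tensor_map es h v) (tensor_map es h w)"
    by (rule tensor_map_mult[OF assms v w])
  show "tensor_map es h (add T v w) = add (tensor A B phi es C psi) (tensor_map es h v) (tensor_map es h w)"
  proof
    fix k
    show "tensor_map es h (add T v w) k = add (tensor A B phi es C psi) (tensor_map es h v) (tensor_map es h w) k"
      using v w h by (cases "k < n") (auto simp: tensor_map_def tensor_def T_add T_carrier ring_hom_add)
  qed
next
  fix v assume "v \<in> carrier T"
  then show "tensor_map es h v \<in> carrier (tensor A B phi es C psi)"
    using ring_hom_closed[OF h] by (auto simp: tensor_map_def tensor_def T_carrier)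
next
  show "tensor_map es h \<one>\<^bsub>T\<^esub> = \<one>\<^bsub>tensor A B phi es C psi\<^esub>"
    by (auto simp: tensor_map_def tensor_def hP)
qed

lemma tensor_map_inr:
  assumes "\<And>a. a \<in> carrier A \<Longrightarrow> h (P a) = psi a" and "b \<in> carrier B"
  shows "tensor_map es h (tensor_inr A B phi es W P b) = tensor_inr A B phi es C psi b"
  using assms by (auto simp: tensor_map_def tensor_inr_def)

section \<open>The derivation \<open>\<partial> \<otimes> \<delta>\<close>\<close>

definition delta_part :: "('b \<Rightarrow> 'b) \<Rightarrow> (nat \<Rightarrow> 'w) \<Rightarrow> nat \<Rightarrow> 'w" where
  "delta_part dlt a = (\<lambda>k\<in>{..<n}. \<Oplus>\<^bsub>W\<^esub>j\<in>{..<n}. a j \<otimes>\<^bsub>W\<^esub> P (coord (dlt (es!j)) k))"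

definition coordwise :: "('w \<Rightarrow> 'w) \<Rightarrow> (nat \<Rightarrow> 'w) \<Rightarrow> nat \<Rightarrow> 'w" where
  "coordwise D a = (\<lambda>k\<in>{..<n}. D (a k))"

text \<open>Extensional on \<open>carrier T\<close>, like the derivation selected by \<open>tensor_deriv\<close>.\<close>
definition tensor_deriv_coords :: "('w \<Rightarrow> 'w) \<Rightarrow> ('b \<Rightarrow> 'b) \<Rightarrow> (nat \<Rightarrow> 'w) \<Rightarrow> nat \<Rightarrow> 'w" where
  "tensor_deriv_coords D dlt a = (if a \<in> carrier T then add T (coordwise D a) (delta_part dlt a) else undefined)"

definition bilin :: "(nat \<Rightarrow> 'w) \<Rightarrow> (nat \<Rightarrow> 'w) \<Rightarrow> (nat \<Rightarrow> nat \<Rightarrow> 'a) \<Rightarrow> 'w" where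
  "bilin a b X = (\<Oplus>\<^bsub>W\<^esub>i\<in>{..<n}. \<Oplus>\<^bsub>W\<^esub>j\<in>{..<n}. (a i \<otimes>\<^bsub>W\<^esub> b j) \<otimes>\<^bsub>W\<^esub> P (X i j))"

lemma bilin_closed [simp]:
  assumes "a \<in> {..<n} \<rightarrow>\<^sub>E carrier W" "b \<in> {..<n} \<rightarrow>\<^sub>E carrier W"
    "\<And>i j. i < n \<Longrightarrow> j < n \<Longrightarrow> X i j \<in> carrier A"
  shows "bilin a b X \<in> carrier W"
  using assms unfolding bilin_def by (auto intro!: W.finsum_closed')

lemma bilin_add:
  assumes "a \<in> {..<n} \<rightarrow>\<^sub>E carrier W" "b \<in> {..<n} \<rightarrow>\<^sub>E carrier W"
    "\<And>i j. i < n \<Longrightarrow> j < n \<Longrightarrow> X i j \<in> carrier A"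
    "\<And>i j. i < n \<Longrightarrow> j < n \<Longrightarrow> Y i j \<in> carrier A"
  shows "bilin a b X \<oplus>\<^bsub>W\<^esub> bilin a b Y = bilin a b (\<lambda>i j. X i j \<oplus>\<^bsub>A\<^esub> Y i j)"
  unfolding bilin_def
  using assms by (subst W.double_finsum_addf[symmetric]) (auto intro!: finsum_cong_pointwise simp: W.r_distr)

lemma bilin_cong:
  assumes "\<And>i j. i < n \<Longrightarrow> j < n \<Longrightarrow> X i j = Y i j"
  shows "bilin a b X = bilin a b Y"
  unfolding bilin_def using assms by (auto intro!: finsum_cong_pointwise)

lemma bilin_sum:
  assumes "a \<in> {..<n} \<rightarrow>\<^sub>E carrier W" "b \<in> {..<n} \<rightarrow>\<^sub>E carrier W"
    "\<And>i j l. i < n \<Longrightarrow> j < n \<Longrightarrow> l < n \<Longrightarrow> F i j l \<in> carrier A"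
  shows "bilin a b (\<lambda>i j. \<Oplus>\<^bsub>A\<^esub>l\<in>{..<n}. F i j l)
     = (\<Oplus>\<^bsub>W\<^esub>i\<in>{..<n}. \<Oplus>\<^bsub>W\<^esub>j\<in>{..<n}. \<Oplus>\<^bsub>W\<^esub>l\<in>{..<n}. (a i \<otimes>\<^bsub>W\<^esub> b j) \<otimes>\<^bsub>W\<^esub> P (F i j l))"
  unfolding bilin_def
proof (intro finsum_cong_pointwise)
  fix i j assume ij: "i \<in> {..<n}" "j \<in> {..<n}"
  have "P (\<Oplus>\<^bsub>A\<^esub>l\<in>{..<n}. F i j l) = (\<Oplus>\<^bsub>W\<^esub>l\<in>{..<n}. P (F i j l))"
    using assms ij by (subst pw.hom_finsum) (auto simp: comp_def)
  then have "(a i \<otimes>\<^bsub>W\<^esub> b j) \<otimes>\<^bsub>W\<^esub> P (\<Oplus>\<^bsub>A\<^esub>l\<in>{..<n}. F i j l) =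
         (a i \<otimes>\<^bsub>W\<^esub> b j) \<otimes>\<^bsub>W\<^esub> (\<Oplus>\<^bsub>W\<^esub>l\<in>{..<n}. P (F i j l))" by simp
  also have "\<dots> = (\<Oplus>\<^bsub>W\<^esub>l\<in>{..<n}. (a i \<otimes>\<^bsub>W\<^esub> b j) \<otimes>\<^bsub>W\<^esub> P (F i j l))"
    using assms ij by (intro W.finsum_rdistr') auto
  finally show "(a i \<otimes>\<^bsub>W\<^esub> b j) \<otimes>\<^bsub>W\<^esub> P (\<Oplus>\<^bsub>A\<^esub>l\<in>{..<n}. F i j l) =
         (\<Oplus>\<^bsub>W\<^esub>l\<in>{..<n}. (a i \<otimes>\<^bsub>W\<^esub> b j) \<otimes>\<^bsub>W\<^esub> P (F i j l))" .
qed

lemma delta_part_closed [simp]: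
  assumes "a \<in> {..<n} \<rightarrow>\<^sub>E carrier W" "\<And>b. b \<in> carrier B \<Longrightarrow> dlt b \<in> carrier B"
  shows "delta_part dlt a \<in> {..<n} \<rightarrow>\<^sub>E carrier W"
  using assms unfolding delta_part_def by (auto intro!: W.finsum_closed')

lemma delta_part_k: "k < n \<Longrightarrow> delta_part dlt a k = (\<Oplus>\<^bsub>W\<^esub>j\<in>{..<n}. a j \<otimes>\<^bsub>W\<^esub> P (coord (dlt (es!j)) k))"
  by (simp add: delta_part_def)

lemma coordwise_k: "k < n \<Longrightarrow> coordwise D a k = D (a k)"
  by (simp add: coordwise_def)

context
  fixes dlt
  assumes dlt_closed: "\<And>b. b \<in> carrier B \<Longrightarrow> dlt b \<in> carrier B"
begin

lemma delta_part_add: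
  assumes a: "a \<in> {..<n} \<rightarrow>\<^sub>E carrier W" and b: "b \<in> {..<n} \<rightarrow>\<^sub>E carrier W" and k: "k < n"
  shows "delta_part dlt (add T a b) k = delta_part dlt a k \<oplus>\<^bsub>W\<^esub> delta_part dlt b k"
proof -
  have "delta_part dlt (add T a b) k
     = (\<Oplus>\<^bsub>W\<^esub>j\<in>{..<n}. a j \<otimes>\<^bsub>W\<^esub> P (coord (dlt (es!j)) k) \<oplus>\<^bsub>W\<^esub> b j \<otimes>\<^bsub>W\<^esub> P (coord (dlt (es!j)) k))"
    using a b k dlt_closed unfolding delta_part_k[OF k] by (intro finsum_cong_pointwise) (simp add: T_add_k W.l_distr)
  also have "\<dots> = delta_part dlt a k \<oplus>\<^bsub>W\<^esub> delta_part dlt b k"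
    using a b k dlt_closed unfolding delta_part_k[OF k] by (intro W.finsum_addf') auto
  finally show ?thesis .
qed

lemma mult_delta_part_right:
  assumes a: "a \<in> {..<n} \<rightarrow>\<^sub>E carrier W" and b: "b \<in> {..<n} \<rightarrow>\<^sub>E carrier W" and k: "k < n"
  shows "mult T a (delta_part dlt b) k = bilin a b (\<lambda>i j. \<Oplus>\<^bsub>A\<^esub>l\<in>{..<n}. coord (dlt (es!j)) l \<otimes>\<^bsub>A\<^esub> sconst i l k)"
proof -
  have "mult T a (delta_part dlt b) k = (\<Oplus>\<^bsub>W\<^esub>i\<in>{..<n}. \<Oplus>\<^bsub>W\<^esub>l\<in>{..<n}.
      (a i \<otimes>\<^bsub>W\<^esub> (\<Oplus>\<^bsub>W\<^esub>j\<in>{..<n}. b j \<otimes>\<^bsub>W\<^esub> P (coord (dlt (es!j)) l))) \<otimes>\<^bsub>W\<^esub> P (sconst i l k))"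
    using k by (simp add: T_mult_k delta_part_def cong: finsum_cong_simp)
  also have "\<dots> = (\<Oplus>\<^bsub>W\<^esub>i\<in>{..<n}. \<Oplus>\<^bsub>W\<^esub>l\<in>{..<n}. \<Oplus>\<^bsub>W\<^esub>j\<in>{..<n}.
      (a i \<otimes>\<^bsub>W\<^esub> b j) \<otimes>\<^bsub>W\<^esub> P (coord (dlt (es!j)) l \<otimes>\<^bsub>A\<^esub> sconst i l k))"
  proof (intro finsum_cong_pointwise)
    fix i l assume il: "i \<in> {..<n}" "l \<in> {..<n}"
    have "(a i \<otimes>\<^bsub>W\<^esub> (\<Oplus>\<^bsub>W\<^esub>j\<in>{..<n}. b j \<otimes>\<^bsub>W\<^esub> P (coord (dlt (es!j)) l))) \<otimes>\<^bsub>W\<^esub> P (sconst i l k)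
      = (\<Oplus>\<^bsub>W\<^esub>j\<in>{..<n}. (a i \<otimes>\<^bsub>W\<^esub> (b j \<otimes>\<^bsub>W\<^esub> P (coord (dlt (es!j)) l))) \<otimes>\<^bsub>W\<^esub> P (sconst i l k))"
      using a b k il dlt_closed by (intro W.mult_finsum_mult) auto
    also have "\<dots> = (\<Oplus>\<^bsub>W\<^esub>j\<in>{..<n}. (a i \<otimes>\<^bsub>W\<^esub> b j) \<otimes>\<^bsub>W\<^esub> P (coord (dlt (es!j)) l \<otimes>\<^bsub>A\<^esub> sconst i l k))"
      using a b k il dlt_closed by (intro finsum_cong_pointwise) (simp add: W.m_ac)
    finally show "(a i \<otimes>\<^bsub>W\<^esub> (\<Oplus>\<^bsub>W\<^esub>j\<in>{..<n}. b j \<otimes>\<^bsub>W\<^esub> P (coord (dlt (es!j)) l))) \<otimes>\<^bsub>W\<^esub> P (sconst i l k)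
      = (\<Oplus>\<^bsub>W\<^esub>j\<in>{..<n}. (a i \<otimes>\<^bsub>W\<^esub> b j) \<otimes>\<^bsub>W\<^esub> P (coord (dlt (es!j)) l \<otimes>\<^bsub>A\<^esub> sconst i l k))" .
  qed
  also have "\<dots> = (\<Oplus>\<^bsub>W\<^esub>i\<in>{..<n}. \<Oplus>\<^bsub>W\<^esub>j\<in>{..<n}. \<Oplus>\<^bsub>W\<^esub>l\<in>{..<n}.
      (a i \<otimes>\<^bsub>W\<^esub> b j) \<otimes>\<^bsub>W\<^esub> P (coord (dlt (es!j)) l \<otimes>\<^bsub>A\<^esub> sconst i l k))"
    using a b k dlt_closed by (intro finsum_cong_pointwise W.finsum_swap) auto
  also have "\<dots> = bilin a b (\<lambda>i j. \<Oplus>\<^bsub>A\<^esub>l\<in>{..<n}. coord (dlt (es!j)) l \<otimes>\<^bsub>A\<^esub> sconst i l k)"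
    using a b k dlt_closed by (subst bilin_sum) auto
  finally show ?thesis .
qed

lemma mult_delta_part_left:
  assumes a: "a \<in> {..<n} \<rightarrow>\<^sub>E carrier W" and b: "b \<in> {..<n} \<rightarrow>\<^sub>E carrier W" and k: "k < n"
  shows "mult T (delta_part dlt a) b k = bilin a b (\<lambda>i j. \<Oplus>\<^bsub>A\<^esub>l\<in>{..<n}. coord (dlt (es!i)) l \<otimes>\<^bsub>A\<^esub> sconst l j k)"
proof -
  have "mult T (delta_part dlt a) b k = (\<Oplus>\<^bsub>W\<^esub>l\<in>{..<n}. \<Oplus>\<^bsub>W\<^esub>j\<in>{..<n}.
      ((\<Oplus>\<^bsub>W\<^esub>i\<in>{..<n}. a i \<otimes>\<^bsub>W\<^esub> P (coord (dlt (es!i)) l)) \<otimes>\<^bsub>W\<^esub> b j) \<otimes>\<^bsub>W\<^esub> P (sconst l j k))"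
    using k by (simp add: T_mult_k delta_part_def cong: finsum_cong_simp)
  also have "\<dots> = (\<Oplus>\<^bsub>W\<^esub>l\<in>{..<n}. \<Oplus>\<^bsub>W\<^esub>j\<in>{..<n}. \<Oplus>\<^bsub>W\<^esub>i\<in>{..<n}.
      (a i \<otimes>\<^bsub>W\<^esub> b j) \<otimes>\<^bsub>W\<^esub> P (coord (dlt (es!i)) l \<otimes>\<^bsub>A\<^esub> sconst l j k))"
  proof (intro finsum_cong_pointwise)
    fix l j assume il: "l \<in> {..<n}" "j \<in> {..<n}"
    have "((\<Oplus>\<^bsub>W\<^esub>i\<in>{..<n}. a i \<otimes>\<^bsub>W\<^esub> P (coord (dlt (es!i)) l)) \<otimes>\<^bsub>W\<^esub> b j) \<otimes>\<^bsub>W\<^esub> P (sconst l j k)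
      = (\<Oplus>\<^bsub>W\<^esub>i\<in>{..<n}. ((a i \<otimes>\<^bsub>W\<^esub> P (coord (dlt (es!i)) l)) \<otimes>\<^bsub>W\<^esub> b j) \<otimes>\<^bsub>W\<^esub> P (sconst l j k))"
      using a b k il dlt_closed by (intro W.finsum_mult_mult) auto
    also have "\<dots> = (\<Oplus>\<^bsub>W\<^esub>i\<in>{..<n}. (a i \<otimes>\<^bsub>W\<^esub> b j) \<otimes>\<^bsub>W\<^esub> P (coord (dlt (es!i)) l \<otimes>\<^bsub>A\<^esub> sconst l j k))"
      using a b k il dlt_closed by (intro finsum_cong_pointwise) (simp add: W.m_ac)
    finally show "((\<Oplus>\<^bsub>W\<^esub>i\<in>{..<n}. a i \<otimes>\<^bsub>W\<^esub> P (coord (dlt (es!i)) l)) \<otimes>\<^bsub>W\<^esub> b j) \<otimes>\<^bsub>W\<^esub> P (sconst l j k)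
      = (\<Oplus>\<^bsub>W\<^esub>i\<in>{..<n}. (a i \<otimes>\<^bsub>W\<^esub> b j) \<otimes>\<^bsub>W\<^esub> P (coord (dlt (es!i)) l \<otimes>\<^bsub>A\<^esub> sconst l j k))" .
  qed
  also have "\<dots> = (\<Oplus>\<^bsub>W\<^esub>l\<in>{..<n}. \<Oplus>\<^bsub>W\<^esub>i\<in>{..<n}. \<Oplus>\<^bsub>W\<^esub>j\<in>{..<n}.
      (a i \<otimes>\<^bsub>W\<^esub> b j) \<otimes>\<^bsub>W\<^esub> P (coord (dlt (es!i)) l \<otimes>\<^bsub>A\<^esub> sconst l j k))"
    using a b k dlt_closed by (intro finsum_cong_pointwise W.finsum_swap) auto
  also have "\<dots> = (\<Oplus>\<^bsub>W\<^esub>i\<in>{..<n}. \<Oplus>\<^bsub>W\<^esub>l\<in>{..<n}. \<Oplus>\<^bsub>W\<^esub>j\<in>{..<n}.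
      (a i \<otimes>\<^bsub>W\<^esub> b j) \<otimes>\<^bsub>W\<^esub> P (coord (dlt (es!i)) l \<otimes>\<^bsub>A\<^esub> sconst l j k))"
    using a b k dlt_closed by (intro W.finsum_swap) (auto intro!: W.finsum_closed')
  also have "\<dots> = (\<Oplus>\<^bsub>W\<^esub>i\<in>{..<n}. \<Oplus>\<^bsub>W\<^esub>j\<in>{..<n}. \<Oplus>\<^bsub>W\<^esub>l\<in>{..<n}.
      (a i \<otimes>\<^bsub>W\<^esub> b j) \<otimes>\<^bsub>W\<^esub> P (coord (dlt (es!i)) l \<otimes>\<^bsub>A\<^esub> sconst l j k))"
    using a b k dlt_closed by (intro finsum_cong_pointwise W.finsum_swap) auto
  also have "\<dots> = bilin a b (\<lambda>i j. \<Oplus>\<^bsub>A\<^esub>l\<in>{..<n}. coord (dlt (es!i)) l \<otimes>\<^bsub>A\<^esub> sconst l j k)"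
    using a b k dlt_closed by (subst bilin_sum) auto
  finally show ?thesis .
qed

lemma delta_part_mult:
  assumes a: "a \<in> {..<n} \<rightarrow>\<^sub>E carrier W" and b: "b \<in> {..<n} \<rightarrow>\<^sub>E carrier W" and k: "k < n"
  shows "delta_part dlt (mult T a b) k = bilin a b (\<lambda>i j. \<Oplus>\<^bsub>A\<^esub>m\<in>{..<n}. sconst i j m \<otimes>\<^bsub>A\<^esub> coord (dlt (es!m)) k)"
proof -
  have "delta_part dlt (mult T a b) k = (\<Oplus>\<^bsub>W\<^esub>m\<in>{..<n}.
      (\<Oplus>\<^bsub>W\<^esub>i\<in>{..<n}. \<Oplus>\<^bsub>W\<^esub>j\<in>{..<n}. (a i \<otimes>\<^bsub>W\<^esub> b j) \<otimes>\<^bsub>W\<^esub> P (sconst i j m)) \<otimes>\<^bsub>W\<^esub> P (coord (dlt (es!m)) k))"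
    using k by (simp add: T_mult_k delta_part_def cong: finsum_cong_simp)
  also have "\<dots> = (\<Oplus>\<^bsub>W\<^esub>m\<in>{..<n}. \<Oplus>\<^bsub>W\<^esub>i\<in>{..<n}. \<Oplus>\<^bsub>W\<^esub>j\<in>{..<n}.
      (a i \<otimes>\<^bsub>W\<^esub> b j) \<otimes>\<^bsub>W\<^esub> P (sconst i j m \<otimes>\<^bsub>A\<^esub> coord (dlt (es!m)) k))"
  proof (intro finsum_cong_pointwise)
    fix m assume m: "m \<in> {..<n}"
    have "(\<Oplus>\<^bsub>W\<^esub>i\<in>{..<n}. \<Oplus>\<^bsub>W\<^esub>j\<in>{..<n}. (a i \<otimes>\<^bsub>W\<^esub> b j) \<otimes>\<^bsub>W\<^esub> P (sconst i j m)) \<otimes>\<^bsub>W\<^esub> P (coord (dlt (es!m)) k)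
      = (\<Oplus>\<^bsub>W\<^esub>i\<in>{..<n}. (\<Oplus>\<^bsub>W\<^esub>j\<in>{..<n}. (a i \<otimes>\<^bsub>W\<^esub> b j) \<otimes>\<^bsub>W\<^esub> P (sconst i j m)) \<otimes>\<^bsub>W\<^esub> P (coord (dlt (es!m)) k))"
      using a b k m dlt_closed by (intro W.finsum_ldistr') (auto intro!: W.finsum_closed')
    also have "\<dots> = (\<Oplus>\<^bsub>W\<^esub>i\<in>{..<n}. \<Oplus>\<^bsub>W\<^esub>j\<in>{..<n}. ((a i \<otimes>\<^bsub>W\<^esub> b j) \<otimes>\<^bsub>W\<^esub> P (sconst i j m)) \<otimes>\<^bsub>W\<^esub> P (coord (dlt (es!m)) k))"
      using a b k m dlt_closed by (intro finsum_cong_pointwise W.finsum_ldistr') auto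
    also have "\<dots> = (\<Oplus>\<^bsub>W\<^esub>i\<in>{..<n}. \<Oplus>\<^bsub>W\<^esub>j\<in>{..<n}.
      (a i \<otimes>\<^bsub>W\<^esub> b j) \<otimes>\<^bsub>W\<^esub> P (sconst i j m \<otimes>\<^bsub>A\<^esub> coord (dlt (es!m)) k))"
      using a b k m dlt_closed by (intro finsum_cong_pointwise) (simp add: W.m_ac)
    finally show "(\<Oplus>\<^bsub>W\<^esub>i\<in>{..<n}. \<Oplus>\<^bsub>W\<^esub>j\<in>{..<n}. (a i \<otimes>\<^bsub>W\<^esub> b j) \<otimes>\<^bsub>W\<^esub> P (sconst i j m)) \<otimes>\<^bsub>W\<^esub> P (coord (dlt (es!m)) k)
      = (\<Oplus>\<^bsub>W\<^esub>i\<in>{..<n}. \<Oplus>\<^bsub>W\<^esub>j\<in>{..<n}.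
      (a i \<otimes>\<^bsub>W\<^esub> b j) \<otimes>\<^bsub>W\<^esub> P (sconst i j m \<otimes>\<^bsub>A\<^esub> coord (dlt (es!m)) k))" .
  qed
  also have "\<dots> = (\<Oplus>\<^bsub>W\<^esub>i\<in>{..<n}. \<Oplus>\<^bsub>W\<^esub>m\<in>{..<n}. \<Oplus>\<^bsub>W\<^esub>j\<in>{..<n}.
      (a i \<otimes>\<^bsub>W\<^esub> b j) \<otimes>\<^bsub>W\<^esub> P (sconst i j m \<otimes>\<^bsub>A\<^esub> coord (dlt (es!m)) k))"
    using a b k dlt_closed by (intro W.finsum_swap) (auto intro!: W.finsum_closed')
  also have "\<dots> = (\<Oplus>\<^bsub>W\<^esub>i\<in>{..<n}. \<Oplus>\<^bsub>W\<^esub>j\<in>{..<n}. \<Oplus>\<^bsub>W\<^esub>m\<in>{..<n}.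
      (a i \<otimes>\<^bsub>W\<^esub> b j) \<otimes>\<^bsub>W\<^esub> P (sconst i j m \<otimes>\<^bsub>A\<^esub> coord (dlt (es!m)) k))"
    using a b k dlt_closed by (intro finsum_cong_pointwise W.finsum_swap) auto
  also have "\<dots> = bilin a b (\<lambda>i j. \<Oplus>\<^bsub>A\<^esub>m\<in>{..<n}. sconst i j m \<otimes>\<^bsub>A\<^esub> coord (dlt (es!m)) k)"
    using a b k dlt_closed by (subst bilin_sum) auto
  finally show ?thesis .
qed

end

context
  fixes d delta
  assumes d: "derivation A d" and delta: "derivation B delta"
    and compat: "\<And>a. a \<in> carrier A \<Longrightarrow> delta (phi a) = phi (d a)"
begin

declare derivation_closed[OF d, simp] derivation_closed[OF delta, simp]

text \<open>The Leibniz defect of \<open>delta_part \<delta>\<close> is the term \<open>bilin a b (d \<circ> sconst)\<close> by which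
  the coordinatewise \<open>\<partial>\<close> fails to be a derivation (\<open>coordwise_mult\<close>), so their sum is a derivation.
  This is where the compatibility of \<open>\<delta>\<close> with \<open>d\<close> enters.\<close>
lemma delta_part_leibniz:
  assumes a: "a \<in> {..<n} \<rightarrow>\<^sub>E carrier W" and b: "b \<in> {..<n} \<rightarrow>\<^sub>E carrier W" and k: "k < n"
  shows "mult T a (delta_part delta b) k \<oplus>\<^bsub>W\<^esub> mult T (delta_part delta a) b k
     = bilin a b (\<lambda>i j. d (sconst i j k)) \<oplus>\<^bsub>W\<^esub> delta_part delta (mult T a b) k"
proof -
  have "mult T a (delta_part delta b) k \<oplus>\<^bsub>W\<^esub> mult T (delta_part delta a) b k
    = bilin a b (\<lambda>i j. \<Oplus>\<^bsub>A\<^esub>l\<in>{..<n}. coord (delta (es!j)) l \<otimes>\<^bsub>A\<^esub> sconst i l k)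
      \<oplus>\<^bsub>W\<^esub> bilin a b (\<lambda>i j. \<Oplus>\<^bsub>A\<^esub>l\<in>{..<n}. coord (delta (es!i)) l \<otimes>\<^bsub>A\<^esub> sconst l j k)"
    using a b k by (simp add: mult_delta_part_right mult_delta_part_left)
  also have "\<dots> = bilin a b (\<lambda>i j. (\<Oplus>\<^bsub>A\<^esub>l\<in>{..<n}. coord (delta (es!j)) l \<otimes>\<^bsub>A\<^esub> sconst i l k)
      \<oplus>\<^bsub>A\<^esub> (\<Oplus>\<^bsub>A\<^esub>l\<in>{..<n}. coord (delta (es!i)) l \<otimes>\<^bsub>A\<^esub> sconst l j k))"
    using a b k by (intro bilin_add) (auto intro!: A.finsum_closed')
  also have "\<dots> = bilin a b (\<lambda>i j. d (sconst i j k) \<oplus>\<^bsub>A\<^esub> (\<Oplus>\<^bsub>A\<^esub>m\<in>{..<n}. sconst i j m \<otimes>\<^bsub>A\<^esub> coord (delta (es!m)) k))"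
    using k by (intro bilin_cong deriv_sconst[OF d delta compat])
  also have "\<dots> = bilin a b (\<lambda>i j. d (sconst i j k)) \<oplus>\<^bsub>W\<^esub> bilin a b (\<lambda>i j. \<Oplus>\<^bsub>A\<^esub>m\<in>{..<n}. sconst i j m \<otimes>\<^bsub>A\<^esub> coord (delta (es!m)) k)"
    using a b k by (intro bilin_add[symmetric]) (auto intro!: A.finsum_closed')
  also have "\<dots> = bilin a b (\<lambda>i j. d (sconst i j k)) \<oplus>\<^bsub>W\<^esub> delta_part delta (mult T a b) k"
    using a b k by (simp add: delta_part_mult)
  finally show ?thesis .
qed

end

context
  fixes d delta dW
  assumes d: "derivation A d" and delta: "derivation B delta"
    and compat: "\<And>a. a \<in> carrier A \<Longrightarrow> delta (phi a) = phi (d a)"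
    and dW: "derivation W dW"
    and compatW: "\<And>a. a \<in> carrier A \<Longrightarrow> dW (P a) = P (d a)"
begin

declare derivation_closed[OF d, simp] derivation_closed[OF delta, simp] derivation_closed[OF dW, simp]

lemma coordwise_mult:
  assumes a: "a \<in> {..<n} \<rightarrow>\<^sub>E carrier W" and b: "b \<in> {..<n} \<rightarrow>\<^sub>E carrier W" and k: "k < n"
  shows "coordwise dW (mult T a b) k = mult T (coordwise dW a) b k \<oplus>\<^bsub>W\<^esub> mult T a (coordwise dW b) k
     \<oplus>\<^bsub>W\<^esub> bilin a b (\<lambda>i j. d (sconst i j k))"
proof -
  have "coordwise dW (mult T a b) k = dW (\<Oplus>\<^bsub>W\<^esub>i\<in>{..<n}. \<Oplus>\<^bsub>W\<^esub>j\<in>{..<n}. (a i \<otimes>\<^bsub>W\<^esub> b j) \<otimes>\<^bsub>W\<^esub> P (sconst i j k))"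
    using k by (simp add: coordwise_k T_mult_k)
  also have "\<dots> = (\<Oplus>\<^bsub>W\<^esub>i\<in>{..<n}. dW (\<Oplus>\<^bsub>W\<^esub>j\<in>{..<n}. (a i \<otimes>\<^bsub>W\<^esub> b j) \<otimes>\<^bsub>W\<^esub> P (sconst i j k)))"
    using a b k by (intro W.deriv_finsum dW) (auto intro!: W.finsum_closed')
  also have "\<dots> = (\<Oplus>\<^bsub>W\<^esub>i\<in>{..<n}. \<Oplus>\<^bsub>W\<^esub>j\<in>{..<n}. dW ((a i \<otimes>\<^bsub>W\<^esub> b j) \<otimes>\<^bsub>W\<^esub> P (sconst i j k)))"
    using a b k by (intro finsum_cong_pointwise W.deriv_finsum dW) auto
  also have "\<dots> = (\<Oplus>\<^bsub>W\<^esub>i\<in>{..<n}. \<Oplus>\<^bsub>W\<^esub>j\<in>{..<n}.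
       ((dW (a i) \<otimes>\<^bsub>W\<^esub> b j) \<otimes>\<^bsub>W\<^esub> P (sconst i j k) \<oplus>\<^bsub>W\<^esub> (a i \<otimes>\<^bsub>W\<^esub> dW (b j)) \<otimes>\<^bsub>W\<^esub> P (sconst i j k))
       \<oplus>\<^bsub>W\<^esub> (a i \<otimes>\<^bsub>W\<^esub> b j) \<otimes>\<^bsub>W\<^esub> P (d (sconst i j k)))"
    using a b k by (intro finsum_cong_pointwise) (simp add: derivation_mult[OF dW] compatW W.l_distr)
  also have "\<dots> = (\<Oplus>\<^bsub>W\<^esub>i\<in>{..<n}. \<Oplus>\<^bsub>W\<^esub>j\<in>{..<n}.
       ((dW (a i) \<otimes>\<^bsub>W\<^esub> b j) \<otimes>\<^bsub>W\<^esub> P (sconst i j k) \<oplus>\<^bsub>W\<^esub> (a i \<otimes>\<^bsub>W\<^esub> dW (b j)) \<otimes>\<^bsub>W\<^esub> P (sconst i j k)))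
       \<oplus>\<^bsub>W\<^esub> (\<Oplus>\<^bsub>W\<^esub>i\<in>{..<n}. \<Oplus>\<^bsub>W\<^esub>j\<in>{..<n}. (a i \<otimes>\<^bsub>W\<^esub> b j) \<otimes>\<^bsub>W\<^esub> P (d (sconst i j k)))"
    using a b k by (intro W.double_finsum_addf) auto
  also have "(\<Oplus>\<^bsub>W\<^esub>i\<in>{..<n}. \<Oplus>\<^bsub>W\<^esub>j\<in>{..<n}.
       ((dW (a i) \<otimes>\<^bsub>W\<^esub> b j) \<otimes>\<^bsub>W\<^esub> P (sconst i j k) \<oplus>\<^bsub>W\<^esub> (a i \<otimes>\<^bsub>W\<^esub> dW (b j)) \<otimes>\<^bsub>W\<^esub> P (sconst i j k)))
     = (\<Oplus>\<^bsub>W\<^esub>i\<in>{..<n}. \<Oplus>\<^bsub>W\<^esub>j\<in>{..<n}. (dW (a i) \<otimes>\<^bsub>W\<^esub> b j) \<otimes>\<^bsub>W\<^esub> P (sconst i j k))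
       \<oplus>\<^bsub>W\<^esub> (\<Oplus>\<^bsub>W\<^esub>i\<in>{..<n}. \<Oplus>\<^bsub>W\<^esub>j\<in>{..<n}. (a i \<otimes>\<^bsub>W\<^esub> dW (b j)) \<otimes>\<^bsub>W\<^esub> P (sconst i j k))"
    using a b k by (intro W.double_finsum_addf) auto
  also have "(\<Oplus>\<^bsub>W\<^esub>i\<in>{..<n}. \<Oplus>\<^bsub>W\<^esub>j\<in>{..<n}. (dW (a i) \<otimes>\<^bsub>W\<^esub> b j) \<otimes>\<^bsub>W\<^esub> P (sconst i j k))
     = mult T (coordwise dW a) b k"
    using k by (simp add: T_mult_k coordwise_k cong: finsum_cong_simp)
  also have "(\<Oplus>\<^bsub>W\<^esub>i\<in>{..<n}. \<Oplus>\<^bsub>W\<^esub>j\<in>{..<n}. (a i \<otimes>\<^bsub>W\<^esub> dW (b j)) \<otimes>\<^bsub>W\<^esub> P (sconst i j k))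
     = mult T a (coordwise dW b) k"
    using k by (simp add: T_mult_k coordwise_k cong: finsum_cong_simp)
  finally show ?thesis by (simp add: bilin_def)
qed

lemma coordwise_closed [simp]: "a \<in> {..<n} \<rightarrow>\<^sub>E carrier W \<Longrightarrow> coordwise dW a \<in> {..<n} \<rightarrow>\<^sub>E carrier W"
  by (auto simp: coordwise_def)

lemma tensor_deriv_coords_on: "a \<in> {..<n} \<rightarrow>\<^sub>E carrier W \<Longrightarrow> tensor_deriv_coords dW delta a = add T (coordwise dW a) (delta_part delta a)"
  by (simp add: tensor_deriv_coords_def T_carrier)

lemma tensor_deriv_coords_closed [simp]: "a \<in> {..<n} \<rightarrow>\<^sub>E carrier W \<Longrightarrow> tensor_deriv_coords dW delta a \<in> {..<n} \<rightarrow>\<^sub>E carrier W"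
  by (simp add: tensor_deriv_coords_on)

lemma tensor_deriv_coords_k: "a \<in> {..<n} \<rightarrow>\<^sub>E carrier W \<Longrightarrow> k < n \<Longrightarrow>
   tensor_deriv_coords dW delta a k = dW (a k) \<oplus>\<^bsub>W\<^esub> (\<Oplus>\<^bsub>W\<^esub>j\<in>{..<n}. a j \<otimes>\<^bsub>W\<^esub> P (coord (delta (es!j)) k))"
  by (simp add: tensor_deriv_coords_on T_add_k coordwise_k delta_part_k)

lemma tensor_deriv_coords_add:
  assumes a: "a \<in> {..<n} \<rightarrow>\<^sub>E carrier W" and b: "b \<in> {..<n} \<rightarrow>\<^sub>E carrier W"
  shows "tensor_deriv_coords dW delta (add T a b) = add T (tensor_deriv_coords dW delta a) (tensor_deriv_coords dW delta b)"
proof (rule vec_eqI)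
  fix k assume k: "k < n"
  show "tensor_deriv_coords dW delta (add T a b) k = add T (tensor_deriv_coords dW delta a) (tensor_deriv_coords dW delta b) k"
    using a b k
    by (simp add: tensor_deriv_coords_on T_add_k coordwise_k derivation_add[OF dW] delta_part_add W.a_ac)
qed (use assms in auto)

lemma tensor_deriv_coords_mult:
  assumes a: "a \<in> {..<n} \<rightarrow>\<^sub>E carrier W" and b: "b \<in> {..<n} \<rightarrow>\<^sub>E carrier W"
  shows "tensor_deriv_coords dW delta (mult T a b) = add T (mult T (tensor_deriv_coords dW delta a) b) (mult T a (tensor_deriv_coords dW delta b))"
proof (rule vec_eqI)
  fix k assume k: "k < n"
  define X1 where "X1 = mult T (coordwise dW a) b k"
  define X2 where "X2 = mult T a (coordwise dW b) k"
  define Bl where "Bl = bilin a b (\<lambda>i j. d (sconst i j k))"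
  define L4 where "L4 = delta_part delta (mult T a b) k"
  define Y1 where "Y1 = mult T a (delta_part delta b) k"
  define Y2 where "Y2 = mult T (delta_part delta a) b k"
  have cl: "X1 \<in> carrier W" "X2 \<in> carrier W" "Bl \<in> carrier W" "L4 \<in> carrier W" "Y1 \<in> carrier W" "Y2 \<in> carrier W"
    unfolding X1_def X2_def Bl_def L4_def Y1_def Y2_def using a b k derivation_closed[OF delta] by auto
  have leibniz: "Y1 \<oplus>\<^bsub>W\<^esub> Y2 = Bl \<oplus>\<^bsub>W\<^esub> L4"
    unfolding Y1_def Y2_def Bl_def L4_def using delta_part_leibniz[OF d delta compat a b k] by blast
  have "tensor_deriv_coords dW delta (mult T a b) k = coordwise dW (mult T a b) k \<oplus>\<^bsub>W\<^esub> L4"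
    using a b k by (simp add: tensor_deriv_coords_on T_add_k L4_def)
  also have "\<dots> = ((X1 \<oplus>\<^bsub>W\<^esub> X2) \<oplus>\<^bsub>W\<^esub> Bl) \<oplus>\<^bsub>W\<^esub> L4"
    using a b k by (simp add: coordwise_mult X1_def X2_def Bl_def)
  also have "\<dots> = (X1 \<oplus>\<^bsub>W\<^esub> X2) \<oplus>\<^bsub>W\<^esub> (Y1 \<oplus>\<^bsub>W\<^esub> Y2)"
    using cl leibniz by (simp add: W.a_assoc)
  also have "\<dots> = (X1 \<oplus>\<^bsub>W\<^esub> Y2) \<oplus>\<^bsub>W\<^esub> (X2 \<oplus>\<^bsub>W\<^esub> Y1)"
    using cl by (simp add: W.a_ac)
  also have "\<dots> = mult T (tensor_deriv_coords dW delta a) b k \<oplus>\<^bsub>W\<^esub> mult T a (tensor_deriv_coords dW delta b) k"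
    using a b k derivation_closed[OF delta] by (simp add: tensor_deriv_coords_on T_l_distr T_r_distr T_add_k X1_def X2_def Y1_def Y2_def)
  finally show "tensor_deriv_coords dW delta (mult T a b) k = add T (mult T (tensor_deriv_coords dW delta a) b) (mult T a (tensor_deriv_coords dW delta b)) k"
    using k by (simp add: T_add_k)
qed (use assms in auto)

lemma tensor_deriv_coords_derivation: "derivation T (tensor_deriv_coords dW delta)"
  unfolding derivation_def T_carrier using tensor_deriv_coords_add tensor_deriv_coords_mult by auto

lemma tensor_deriv_coords_ext: "tensor_deriv_coords dW delta \<in> extensional (carrier T)"
  by (simp add: tensor_deriv_coords_def extensional_def)

lemma tensor_deriv_coords_pure:
  assumes x: "x \<in> carrier W" and b: "b \<in> carrier B"
  shows "tensor_deriv_coords dW delta (pure x b) = add T (pure (dW x) b) (pure x (delta b))"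
proof (rule vec_eqI)
  fix k assume k: "k < n"
  have "(\<Oplus>\<^bsub>W\<^esub>j\<in>{..<n}. pure x b j \<otimes>\<^bsub>W\<^esub> P (coord (delta (es!j)) k))
     = (\<Oplus>\<^bsub>W\<^esub>j\<in>{..<n}. x \<otimes>\<^bsub>W\<^esub> P (coord b j \<otimes>\<^bsub>A\<^esub> coord (delta (es!j)) k))"
    using x b k by (intro finsum_cong_pointwise) (simp add: pure_k W.m_assoc)
  also have "\<dots> = x \<otimes>\<^bsub>W\<^esub> (\<Oplus>\<^bsub>W\<^esub>j\<in>{..<n}. P (coord b j \<otimes>\<^bsub>A\<^esub> coord (delta (es!j)) k))"
    using x b k by (intro W.finsum_rdistr'[symmetric]) auto
  also have "\<dots> = x \<otimes>\<^bsub>W\<^esub> P (\<Oplus>\<^bsub>A\<^esub>j\<in>{..<n}. coord b j \<otimes>\<^bsub>A\<^esub> coord (delta (es!j)) k)"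
    using x b k by (subst pw.hom_finsum) (auto simp: comp_def)
  finally have L: "(\<Oplus>\<^bsub>W\<^esub>j\<in>{..<n}. pure x b j \<otimes>\<^bsub>W\<^esub> P (coord (delta (es!j)) k))
     = x \<otimes>\<^bsub>W\<^esub> P (\<Oplus>\<^bsub>A\<^esub>j\<in>{..<n}. coord b j \<otimes>\<^bsub>A\<^esub> coord (delta (es!j)) k)" .
  have cfd: "coord (delta b) k = d (coord b k) \<oplus>\<^bsub>A\<^esub> (\<Oplus>\<^bsub>A\<^esub>j\<in>{..<n}. coord b j \<otimes>\<^bsub>A\<^esub> coord (delta (es!j)) k)"
    using coord_deriv[OF d delta compat b k] .
  have S: "(\<Oplus>\<^bsub>A\<^esub>j\<in>{..<n}. coord b j \<otimes>\<^bsub>A\<^esub> coord (delta (es!j)) k) \<in> carrier A"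
    using b k by (auto intro!: A.finsum_closed')
  show "tensor_deriv_coords dW delta (pure x b) k = add T (pure (dW x) b) (pure x (delta b)) k"
    using x b k S by (simp add: tensor_deriv_coords_k pure_k T_add_k L cfd derivation_mult[OF dW] compatW W.r_distr W.a_assoc)
qed (use assms in auto)

lemma tensor_deriv_coords_inl:
  "x \<in> carrier W \<Longrightarrow> tensor_deriv_coords dW delta (tensor_inl A B phi es W P x) = tensor_inl A B phi es W P (dW x)"
  by (simp add: tensor_inl_pure tensor_deriv_coords_pure B.deriv_one[OF delta] pure_zero_right T_add_zero)

lemma tensor_deriv_coords_inr:
  "b \<in> carrier B \<Longrightarrow> tensor_deriv_coords dW delta (tensor_inr A B phi es W P b) = tensor_inr A B phi es W P (delta b)"
  by (simp add: tensor_inr_pure tensor_deriv_coords_pure W.deriv_one[OF dW] pure_zero_left T_zero_add)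

lemma tensor_deriv_coords_diff_inl: "diff_hom W dW T (tensor_deriv_coords dW delta) (tensor_inl A B phi es W P)"
  unfolding diff_hom_def using tensor_inl_hom tensor_deriv_coords_inl by auto

lemma tensor_deriv_coords_diff_inr: "diff_hom B delta T (tensor_deriv_coords dW delta) (tensor_inr A B phi es W P)"
  unfolding diff_hom_def using tensor_inr_hom tensor_deriv_coords_inr by auto

lemma tensor_derivation_zero:
  assumes E: "derivation T E"
  shows "E (zero T) = zero T"
proof -
  have cl: "E (zero T) \<in> {..<n} \<rightarrow>\<^sub>E carrier W"
  proof -
    have "zero T \<in> {..<n} \<rightarrow>\<^sub>E carrier W" by simp
    then show ?thesis using E unfolding derivation_def T_carrier by blast
  qed
  have "E (zero T) = E (add T (zero T) (zero T))" by (simp add: T_add_zero)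
  also have "\<dots> = add T (E (zero T)) (E (zero T))"
    using E unfolding derivation_def T_carrier by auto
  finally have eq: "E (zero T) = add T (E (zero T)) (E (zero T))" .
  show ?thesis
  proof (rule vec_eqI[OF cl])
    fix k assume k: "k < n"
    have "E (zero T) k = E (zero T) k \<oplus>\<^bsub>W\<^esub> E (zero T) k"
      using eq k by (metis T_add_k)
    then show "E (zero T) k = zero T k"
      using cl k by (simp add: T_zero)
  qed simp
qed

lemma pure_basis_prod:
  assumes x: "x \<in> carrier W" and m: "m < n"
  shows "pure x (es!m) = mult T (tensor_inl A B phi es W P x) (tensor_inr A B phi es W P (es!m))"
  using assms by (simp add: tensor_inl_pure tensor_inr_pure pure_mult)

lemma tensor_derivation_pure_basis:
  assumes E: "derivation T E" and El: "diff_hom W dW T E (tensor_inl A B phi es W P)"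
    and Er: "diff_hom B delta T E (tensor_inr A B phi es W P)"
    and x: "x \<in> carrier W" and m: "m < n"
  shows "E (pure x (es!m)) = add T (mult T (tensor_inl A B phi es W P (dW x)) (tensor_inr A B phi es W P (es!m)))
            (mult T (tensor_inl A B phi es W P x) (tensor_inr A B phi es W P (delta (es!m))))"
proof -
  have c1: "tensor_inl A B phi es W P x \<in> carrier T" using x tensor_inl_hom by (rule_tac ring_hom_closed) auto
  have c2: "tensor_inr A B phi es W P (es!m) \<in> carrier T" using m tensor_inr_hom by (rule_tac ring_hom_closed) auto
  have "E (pure x (es!m)) = E (mult T (tensor_inl A B phi es W P x) (tensor_inr A B phi es W P (es!m)))"
    using x m by (simp add: pure_basis_prod)
  also have "\<dots> = add T (mult T (E (tensor_inl A B phi es W P x)) (tensor_inr A B phi es W P (es!m)))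
            (mult T (tensor_inl A B phi es W P x) (E (tensor_inr A B phi es W P (es!m))))"
    using E c1 c2 unfolding derivation_def by blast
  also have "\<dots> = add T (mult T (tensor_inl A B phi es W P (dW x)) (tensor_inr A B phi es W P (es!m)))
            (mult T (tensor_inl A B phi es W P x) (tensor_inr A B phi es W P (delta (es!m))))"
    using El Er x m unfolding diff_hom_def by auto
  finally show ?thesis .
qed

lemma tensor_derivation_unique:
  assumes E: "derivation T E" and El: "diff_hom W dW T E (tensor_inl A B phi es W P)"
    and Er: "diff_hom B delta T E (tensor_inr A B phi es W P)"
    and v: "v \<in> {..<n} \<rightarrow>\<^sub>E carrier W"
  shows "E v = tensor_deriv_coords dW delta v"
proof -
  define s where "s m = (\<lambda>k\<in>{..<n}. if k < m then v k else \<zero>\<^bsub>W\<^esub>)" for m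
  have s_cl: "s m \<in> {..<n} \<rightarrow>\<^sub>E carrier W" for m using v by (auto simp: s_def)
  have "m \<le> n \<Longrightarrow> E (s m) = tensor_deriv_coords dW delta (s m)" for m
  proof (induction m)
    case 0
    have "s 0 = zero T" by (simp add: s_def T_zero)
    then show ?case using tensor_derivation_zero[OF E] tensor_derivation_zero[OF tensor_deriv_coords_derivation] by simp
  next
    case (Suc m)
    then have m: "m < n" by simp
    have sS: "s (Suc m) = add T (s m) (pure (v m) (es!m))"
      using v m by (intro vec_eqI) (auto simp: s_def T_add_k pure_k coord_basis s_cl less_Suc_eq)
    have scl: "pure (v m) (es!m) \<in> {..<n} \<rightarrow>\<^sub>E carrier W" using v m by simp
    have "E (s (Suc m)) = add T (E (s m)) (E (pure (v m) (es!m)))"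
      using E sS s_cl scl unfolding derivation_def T_carrier by auto
    moreover have "tensor_deriv_coords dW delta (s (Suc m)) = add T (tensor_deriv_coords dW delta (s m)) (tensor_deriv_coords dW delta (pure (v m) (es!m)))"
      using sS s_cl scl tensor_deriv_coords_add by auto
    moreover have "E (pure (v m) (es!m)) = tensor_deriv_coords dW delta (pure (v m) (es!m))"
      using tensor_derivation_pure_basis[OF E El Er, of "v m" m] tensor_derivation_pure_basis[OF tensor_deriv_coords_derivation tensor_deriv_coords_diff_inl tensor_deriv_coords_diff_inr, of "v m" m] v m
      by simp
    ultimately show ?case using Suc by simp
  qed
  moreover have "s n = v" using v by (intro vec_eqI) (auto simp: s_def s_cl)
  ultimately show ?thesis by auto
qed

lemma tensor_deriv_eq: "tensor_deriv A B phi es W P dW delta = tensor_deriv_coords dW delta"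
  unfolding tensor_deriv_def
proof (rule the_equality)
  show "derivation T (tensor_deriv_coords dW delta) \<and> tensor_deriv_coords dW delta \<in> extensional (carrier T) \<and>
    diff_hom W dW T (tensor_deriv_coords dW delta) (tensor_inl A B phi es W P) \<and>
    diff_hom B delta T (tensor_deriv_coords dW delta) (tensor_inr A B phi es W P)"
    using tensor_deriv_coords_derivation tensor_deriv_coords_ext tensor_deriv_coords_diff_inl tensor_deriv_coords_diff_inr by blast
next
  fix E assume H: "derivation T E \<and> E \<in> extensional (carrier T) \<and>
    diff_hom W dW T E (tensor_inl A B phi es W P) \<and> diff_hom B delta T E (tensor_inr A B phi es W P)"
  show "E = tensor_deriv_coords dW delta"
  proof
    fix v show "E v = tensor_deriv_coords dW delta v"
    proof (cases "v \<in> carrier T")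
      case True then show ?thesis using H tensor_derivation_unique T_carrier by auto
    next
      case False then show ?thesis using H tensor_deriv_coords_ext by (auto simp: extensional_def)
    qed
  qed
qed

end

end


section \<open>Descent of the derivation\<close>

locale weil_setting = tensor_setting A B phi es W P
  for A :: "'a ring" and B :: "'b ring" and phi es and W :: "'w ring" and P +
  fixes d :: "'a \<Rightarrow> 'a" and D :: "'d ring" and phiD :: "'b \<Rightarrow> 'd" and dD :: "'d \<Rightarrow> 'd"
    and u :: "'d \<Rightarrow> nat \<Rightarrow> 'w"
  assumes d: "derivation A d" and cD: "cring D" and phiD: "phiD \<in> ring_hom B D"
    and dD: "derivation D dD"
    and u: "u \<in> ring_hom D T"
    and u_inr: "\<And>b. b \<in> carrier B \<Longrightarrow> u (phiD b) = tensor_inr A B phi es W P b"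
begin

sublocale D: cring D by (rule cD)

declare derivation_closed[OF d, simp] derivation_closed[OF dD, simp]

lemma u_closed [simp]: "x \<in> carrier D \<Longrightarrow> u x \<in> {..<n} \<rightarrow>\<^sub>E carrier W"
  using ring_hom_closed[OF u] T_carrier by auto
lemma u_add: "x \<in> carrier D \<Longrightarrow> y \<in> carrier D \<Longrightarrow> u (x \<oplus>\<^bsub>D\<^esub> y) = add T (u x) (u y)"
  using ring_hom_add[OF u] by auto
lemma u_mult: "x \<in> carrier D \<Longrightarrow> y \<in> carrier D \<Longrightarrow> u (x \<otimes>\<^bsub>D\<^esub> y) = mult T (u x) (u y)"
  using ring_hom_mult[OF u] by auto

definition psi :: "'a \<Rightarrow> 'w \<times> 'w" where "psi a = (P a, P (d a))"

lemma psi_hom: "psi \<in> ring_hom A (dual_numbers W)"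
  by (rule ring_hom_memI)
    (auto simp: psi_def dual_numbers_simps derivation_add[OF d] derivation_mult[OF d] A.deriv_one[OF d]
      W.a_comm)

lemma dual_tensor_mult:
  assumes Q: "\<And>a. a \<in> carrier A \<Longrightarrow> Q a \<in> carrier W"
    and F: "F \<in> {..<n} \<rightarrow>\<^sub>E carrier W \<times> carrier W" and G: "G \<in> {..<n} \<rightarrow>\<^sub>E carrier W \<times> carrier W"
    and k: "k < n"
  shows "mult (tensor A B phi es (dual_numbers W) (\<lambda>a. (P a, Q a))) F G k =
    ((\<Oplus>\<^bsub>W\<^esub>i\<in>{..<n}. \<Oplus>\<^bsub>W\<^esub>j\<in>{..<n}. (fst (F i) \<otimes>\<^bsub>W\<^esub> fst (G j)) \<otimes>\<^bsub>W\<^esub> P (sconst i j k)),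
     (\<Oplus>\<^bsub>W\<^esub>i\<in>{..<n}. \<Oplus>\<^bsub>W\<^esub>j\<in>{..<n}. (fst (F i) \<otimes>\<^bsub>W\<^esub> fst (G j)) \<otimes>\<^bsub>W\<^esub> Q (sconst i j k) \<oplus>\<^bsub>W\<^esub>
        (fst (F i) \<otimes>\<^bsub>W\<^esub> snd (G j) \<oplus>\<^bsub>W\<^esub> snd (F i) \<otimes>\<^bsub>W\<^esub> fst (G j)) \<otimes>\<^bsub>W\<^esub> P (sconst i j k)))"
proof -
  have Fi: "\<And>i. i < n \<Longrightarrow> fst (F i) \<in> carrier W \<and> snd (F i) \<in> carrier W"
    using F by (auto simp: PiE_def Pi_def mem_Times_iff)
  have Gj: "\<And>j. j < n \<Longrightarrow> fst (G j) \<in> carrier W \<and> snd (G j) \<in> carrier W"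
    using G by (auto simp: PiE_def Pi_def mem_Times_iff)
  define H where "H i j = (F i \<otimes>\<^bsub>dual_numbers W\<^esub> G j) \<otimes>\<^bsub>dual_numbers W\<^esub> (P (sconst i j k), Q (sconst i j k))" for i j
  have H: "\<And>i j. i < n \<Longrightarrow> j < n \<Longrightarrow> H i j =
      ((fst (F i) \<otimes>\<^bsub>W\<^esub> fst (G j)) \<otimes>\<^bsub>W\<^esub> P (sconst i j k),
       (fst (F i) \<otimes>\<^bsub>W\<^esub> fst (G j)) \<otimes>\<^bsub>W\<^esub> Q (sconst i j k) \<oplus>\<^bsub>W\<^esub>
        (fst (F i) \<otimes>\<^bsub>W\<^esub> snd (G j) \<oplus>\<^bsub>W\<^esub> snd (F i) \<otimes>\<^bsub>W\<^esub> fst (G j)) \<otimes>\<^bsub>W\<^esub> P (sconst i j k))"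
    using Fi Gj k Q by (simp add: H_def dual_numbers_simps W.a_comm)
  have Hc: "\<And>i j. i < n \<Longrightarrow> j < n \<Longrightarrow> H i j \<in> carrier W \<times> carrier W"
    using Fi Gj k Q H by simp
  have inner: "\<And>i. i < n \<Longrightarrow> finsum (dual_numbers W) (H i) {..<n} = (\<Oplus>\<^bsub>W\<^esub>j\<in>{..<n}. fst (H i j), \<Oplus>\<^bsub>W\<^esub>j\<in>{..<n}. snd (H i j))"
    using Hc by (intro W.finsum_dual_numbers) auto
  have "mult (tensor A B phi es (dual_numbers W) (\<lambda>a. (P a, Q a))) F G k = finsum (dual_numbers W) (\<lambda>i. finsum (dual_numbers W) (H i) {..<n}) {..<n}"
    using k unfolding H_def by (simp add: tensor_def)
  also have "\<dots> = (\<Oplus>\<^bsub>W\<^esub>i\<in>{..<n}. fst (finsum (dual_numbers W) (H i) {..<n}), \<Oplus>\<^bsub>W\<^esub>i\<in>{..<n}. snd (finsum (dual_numbers W) (H i) {..<n}))"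
    using Hc inner by (intro W.finsum_dual_numbers) (auto intro!: W.finsum_closed' simp: mem_Times_iff)
  also have "\<dots> = ((\<Oplus>\<^bsub>W\<^esub>i\<in>{..<n}. \<Oplus>\<^bsub>W\<^esub>j\<in>{..<n}. fst (H i j)), (\<Oplus>\<^bsub>W\<^esub>i\<in>{..<n}. \<Oplus>\<^bsub>W\<^esub>j\<in>{..<n}. snd (H i j)))"
    using inner by (simp cong: finsum_cong_simp)
  finally show ?thesis using H by (simp cong: finsum_cong_simp)
qed

lemma mult_dual_pairs:
  assumes a: "a \<in> {..<n} \<rightarrow>\<^sub>E carrier W" and a': "a' \<in> {..<n} \<rightarrow>\<^sub>E carrier W"
    and b: "b \<in> {..<n} \<rightarrow>\<^sub>E carrier W" and b': "b' \<in> {..<n} \<rightarrow>\<^sub>E carrier W" and k: "k < n"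
  shows "mult (tensor A B phi es (dual_numbers W) psi) (\<lambda>i\<in>{..<n}. (a i, a' i)) (\<lambda>j\<in>{..<n}. (b j, b' j)) k
    = (mult T a b k, bilin a b (\<lambda>i j. d (sconst i j k)) \<oplus>\<^bsub>W\<^esub> (mult T a b' k \<oplus>\<^bsub>W\<^esub> mult T a' b k))"
proof -
  have "mult (tensor A B phi es (dual_numbers W) psi) (\<lambda>i\<in>{..<n}. (a i, a' i)) (\<lambda>j\<in>{..<n}. (b j, b' j)) k
    = ((\<Oplus>\<^bsub>W\<^esub>i\<in>{..<n}. \<Oplus>\<^bsub>W\<^esub>j\<in>{..<n}. (a i \<otimes>\<^bsub>W\<^esub> b j) \<otimes>\<^bsub>W\<^esub> P (sconst i j k)),
       (\<Oplus>\<^bsub>W\<^esub>i\<in>{..<n}. \<Oplus>\<^bsub>W\<^esub>j\<in>{..<n}. (a i \<otimes>\<^bsub>W\<^esub> b j) \<otimes>\<^bsub>W\<^esub> P (d (sconst i j k)) \<oplus>\<^bsub>W\<^esub>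
        (a i \<otimes>\<^bsub>W\<^esub> b' j \<oplus>\<^bsub>W\<^esub> a' i \<otimes>\<^bsub>W\<^esub> b j) \<otimes>\<^bsub>W\<^esub> P (sconst i j k)))"
    unfolding psi_def[abs_def]
    using dual_tensor_mult[of "\<lambda>a. P (d a)" "\<lambda>i\<in>{..<n}. (a i, a' i)" "\<lambda>j\<in>{..<n}. (b j, b' j)" k] assms
    by (simp cong: finsum_cong_simp)
  also have "\<dots> = (mult T a b k, bilin a b (\<lambda>i j. d (sconst i j k)) \<oplus>\<^bsub>W\<^esub> (mult T a b' k \<oplus>\<^bsub>W\<^esub> mult T a' b k))"
    using assms by (simp add: W.l_distr W.double_finsum_addf T_mult_k bilin_def cong: finsum_cong_simp)
  finally show ?thesis .
qed

text \<open>If \<open>\<partial>\<^sup>W\<close> exists, \<open>dual_lift \<delta> x\<close> is \<open>(id + \<epsilon> \<partial>\<^sup>W) \<otimes> id\<close> applied to \<open>u x\<close>.\<close>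
definition dual_lift :: "('b \<Rightarrow> 'b) \<Rightarrow> 'd \<Rightarrow> nat \<Rightarrow> 'w \<times> 'w" where
  "dual_lift dlt x = (\<lambda>k\<in>{..<n}. (u x k, u (dD x) k \<ominus>\<^bsub>W\<^esub> delta_part dlt (u x) k))"

context
  fixes dlt
  assumes delta: "derivation B dlt"
    and compat: "\<And>a. a \<in> carrier A \<Longrightarrow> dlt (phi a) = phi (d a)"
    and dDc: "\<And>b. b \<in> carrier B \<Longrightarrow> phiD (dlt b) = dD (phiD b)"
begin

declare derivation_closed[OF delta, simp]

lemma dual_lift_closed: "x \<in> carrier D \<Longrightarrow> dual_lift dlt x \<in> {..<n} \<rightarrow>\<^sub>E carrier W \<times> carrier W"
  by (auto simp: dual_lift_def)

lemma dual_lift_k: "k < n \<Longrightarrow> dual_lift dlt x k = (u x k, u (dD x) k \<ominus>\<^bsub>W\<^esub> delta_part dlt (u x) k)"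
  by (simp add: dual_lift_def)

lemma dual_lift_inr:
  assumes b: "b \<in> carrier B"
  shows "dual_lift dlt (phiD b) = tensor_inr A B phi es (dual_numbers W) psi b"
proof
  fix k show "dual_lift dlt (phiD b) k = tensor_inr A B phi es (dual_numbers W) psi b k"
  proof (cases "k < n")
    case False then show ?thesis by (simp add: dual_lift_def tensor_inr_def)
  next
    case k: True
    have u1: "u (phiD b) k = P (coord b k)" using b k by (simp add: u_inr tensor_inr_def)
    have "u (dD (phiD b)) = u (phiD (dlt b))" using b by (simp add: dDc)
    then have "u (dD (phiD b)) k = P (coord (dlt b) k)" using b k by (simp add: u_inr tensor_inr_def)
    also have "\<dots> = P (d (coord b k)) \<oplus>\<^bsub>W\<^esub> P (\<Oplus>\<^bsub>A\<^esub>j\<in>{..<n}. coord b j \<otimes>\<^bsub>A\<^esub> coord (dlt (es!j)) k)"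
      using b k by (simp add: coord_deriv[OF d delta compat b k] A.finsum_closed')
    finally have u2: "u (dD (phiD b)) k = P (d (coord b k)) \<oplus>\<^bsub>W\<^esub> P (\<Oplus>\<^bsub>A\<^esub>j\<in>{..<n}. coord b j \<otimes>\<^bsub>A\<^esub> coord (dlt (es!j)) k)" .
    have "delta_part dlt (u (phiD b)) k = (\<Oplus>\<^bsub>W\<^esub>j\<in>{..<n}. P (coord b j \<otimes>\<^bsub>A\<^esub> coord (dlt (es!j)) k))"
      using b k by (simp add: delta_part_k) (intro finsum_cong_pointwise, simp add: u_inr tensor_inr_def)
    also have "\<dots> = P (\<Oplus>\<^bsub>A\<^esub>j\<in>{..<n}. coord b j \<otimes>\<^bsub>A\<^esub> coord (dlt (es!j)) k)"
      using b k by (subst pw.hom_finsum) (auto simp: comp_def)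
    finally have u3: "delta_part dlt (u (phiD b)) k = P (\<Oplus>\<^bsub>A\<^esub>j\<in>{..<n}. coord b j \<otimes>\<^bsub>A\<^esub> coord (dlt (es!j)) k)" .
    show ?thesis using b k u1 u2 u3
      by (simp add: dual_lift_k tensor_inr_def psi_def W.add_minus_cancel A.finsum_closed')
  qed
qed

lemma dual_lift_add:
  assumes x: "x \<in> carrier D" and y: "y \<in> carrier D"
  shows "dual_lift dlt (x \<oplus>\<^bsub>D\<^esub> y) = add (tensor A B phi es (dual_numbers W) psi) (dual_lift dlt x) (dual_lift dlt y)"
proof
  fix k show "dual_lift dlt (x \<oplus>\<^bsub>D\<^esub> y) k = add (tensor A B phi es (dual_numbers W) psi) (dual_lift dlt x) (dual_lift dlt y) k"
  proof (cases "k < n")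
    case False then show ?thesis by (simp add: dual_lift_def tensor_def)
  next
    case k: True
    have L: "delta_part dlt (add T (u x) (u y)) k = delta_part dlt (u x) k \<oplus>\<^bsub>W\<^esub> delta_part dlt (u y) k"
      using x y k by (simp add: delta_part_add)
    have "dual_lift dlt (x \<oplus>\<^bsub>D\<^esub> y) k = (u x k \<oplus>\<^bsub>W\<^esub> u y k,
       (u (dD x) k \<oplus>\<^bsub>W\<^esub> u (dD y) k) \<ominus>\<^bsub>W\<^esub> (delta_part dlt (u x) k \<oplus>\<^bsub>W\<^esub> delta_part dlt (u y) k))"
      using x y k by (simp add: dual_lift_k u_add derivation_add[OF dD] L T_add_k)
    then show ?thesis using x y k
      by (simp add: tensor_def dual_numbers_simps dual_lift_k W.add_minus_add)
  qed
qed

lemma dual_lift_one: "dual_lift dlt \<one>\<^bsub>D\<^esub> = one (tensor A B phi es (dual_numbers W) psi)"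
proof -
  have "dual_lift dlt \<one>\<^bsub>D\<^esub> = dual_lift dlt (phiD \<one>\<^bsub>B\<^esub>)" using ring_hom_one[OF phiD] by simp
  also have "\<dots> = tensor_inr A B phi es (dual_numbers W) psi \<one>\<^bsub>B\<^esub>" by (simp add: dual_lift_inr)
  also have "\<dots> = one (tensor A B phi es (dual_numbers W) psi)" by (simp add: tensor_inr_def tensor_def)
  finally show ?thesis .
qed

lemma dual_lift_mult:
  assumes x: "x \<in> carrier D" and y: "y \<in> carrier D"
  shows "dual_lift dlt (x \<otimes>\<^bsub>D\<^esub> y) = mult (tensor A B phi es (dual_numbers W) psi) (dual_lift dlt x) (dual_lift dlt y)"
proof
  fix k show "dual_lift dlt (x \<otimes>\<^bsub>D\<^esub> y) k = mult (tensor A B phi es (dual_numbers W) psi) (dual_lift dlt x) (dual_lift dlt y) k"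
  proof (cases "k < n")
    case False then show ?thesis by (simp add: dual_lift_def tensor_def)
  next
    case k: True
    define a where "a = u x"
    define b where "b = u y"
    define a' where "a' = (\<lambda>k\<in>{..<n}. u (dD x) k \<ominus>\<^bsub>W\<^esub> delta_part dlt a k)"
    define b' where "b' = (\<lambda>k\<in>{..<n}. u (dD y) k \<ominus>\<^bsub>W\<^esub> delta_part dlt b k)"
    have ab: "a \<in> {..<n} \<rightarrow>\<^sub>E carrier W" "b \<in> {..<n} \<rightarrow>\<^sub>E carrier W"
      and ab': "a' \<in> {..<n} \<rightarrow>\<^sub>E carrier W" "b' \<in> {..<n} \<rightarrow>\<^sub>E carrier W"
      using x y by (auto simp: a_def b_def a'_def b'_def)
    have "dual_lift dlt x = (\<lambda>i\<in>{..<n}. (a i, a' i))" "dual_lift dlt y = (\<lambda>j\<in>{..<n}. (b j, b' j))"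
      by (auto simp: dual_lift_def a_def a'_def b_def b'_def)
    then have prod: "mult (tensor A B phi es (dual_numbers W) psi) (dual_lift dlt x) (dual_lift dlt y) k
       = (mult T a b k, bilin a b (\<lambda>i j. d (sconst i j k)) \<oplus>\<^bsub>W\<^esub> (mult T a b' k \<oplus>\<^bsub>W\<^esub> mult T a' b k))"
      using mult_dual_pairs[OF ab(1) ab'(1) ab(2) ab'(2) k] by simp
    have ux: "u (dD x) = add T a' (delta_part dlt a)"
      using x ab ab' by (intro vec_eqI) (auto simp: T_add_k a'_def W.minus_add_cancel)
    have uy: "u (dD y) = add T b' (delta_part dlt b)"
      using y ab ab' by (intro vec_eqI) (auto simp: T_add_k b'_def W.minus_add_cancel)
    have "u (dD (x \<otimes>\<^bsub>D\<^esub> y)) = add T (mult T (u (dD x)) b) (mult T a (u (dD y)))"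
      using x y by (simp add: derivation_mult[OF dD] u_add u_mult a_def b_def)
    also have "\<dots> = add T (add T (mult T a' b) (mult T (delta_part dlt a) b))
        (add T (mult T a b') (mult T a (delta_part dlt b)))"
      using ab ab' by (simp add: ux uy T_l_distr T_r_distr)
    finally have "u (dD (x \<otimes>\<^bsub>D\<^esub> y)) k = (mult T a' b k \<oplus>\<^bsub>W\<^esub> mult T (delta_part dlt a) b k)
        \<oplus>\<^bsub>W\<^esub> (mult T a b' k \<oplus>\<^bsub>W\<^esub> mult T a (delta_part dlt b) k)"
      using k by (simp add: T_add_k)
    moreover have "mult T a (delta_part dlt b) k \<oplus>\<^bsub>W\<^esub> mult T (delta_part dlt a) b k
       = bilin a b (\<lambda>i j. d (sconst i j k)) \<oplus>\<^bsub>W\<^esub> delta_part dlt (mult T a b) k"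
      using delta_part_leibniz[OF d delta compat ab k] .
    ultimately have "bilin a b (\<lambda>i j. d (sconst i j k)) \<oplus>\<^bsub>W\<^esub> (mult T a b' k \<oplus>\<^bsub>W\<^esub> mult T a' b k)
       = u (dD (x \<otimes>\<^bsub>D\<^esub> y)) k \<ominus>\<^bsub>W\<^esub> delta_part dlt (mult T a b) k"
      using ab ab' k by (intro W.eq_minus_of_add_eq) (simp_all add: W.a_ac)
    then show ?thesis using prod x y k by (simp add: dual_lift_k u_mult a_def b_def)
  qed
qed

lemma dual_lift_hom: "dual_lift dlt \<in> ring_hom D (tensor A B phi es (dual_numbers W) psi)"
  by (rule ring_hom_memI) (auto simp: dual_lift_add dual_lift_mult dual_lift_one dual_lift_closed tensor_def dual_numbers_simps)

end

lemma dual_lift_indep: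
  assumes dl1: "derivation B dl1" "\<And>b. b \<in> carrier B \<Longrightarrow> phiD (dl1 b) = dD (phiD b)"
    and dl2: "derivation B dl2" "\<And>b. b \<in> carrier B \<Longrightarrow> phiD (dl2 b) = dD (phiD b)"
  shows "dual_lift dl1 = dual_lift dl2"
proof -
  have "P (coord (dl1 (es!j)) k) = P (coord (dl2 (es!j)) k)" if j: "j < n" and k: "k < n" for j k
  proof -
    have "tensor_inr A B phi es W P (dl1 (es!j)) = tensor_inr A B phi es W P (dl2 (es!j))"
      using j dl1 dl2 u_inr[symmetric] by (metis es_closed derivation_closed)
    then show ?thesis
      using k by (metis (no_types, lifting) lessThan_iff restrict_apply' tensor_inr_def)
  qed
  then have "delta_part dl1 v = delta_part dl2 v" for v
    unfolding delta_part_def by (intro restrict_ext finsum_cong_pointwise) auto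
  then show ?thesis unfolding dual_lift_def by simp
qed

definition weil_factorization ::
  "('w \<times> 'w) ring \<Rightarrow> ('a \<Rightarrow> 'w \<times> 'w) \<Rightarrow> ('d \<Rightarrow> nat \<Rightarrow> 'w \<times> 'w) \<Rightarrow> ('w \<Rightarrow> 'w \<times> 'w) \<Rightarrow> bool" where
  "weil_factorization C ps f g \<longleftrightarrow> g \<in> ring_hom W C \<and> (\<forall>a\<in>carrier A. g (P a) = ps a) \<and>
     (\<forall>x\<in>carrier D. tensor_map es g (u x) = f x)"

lemma u_deriv_iff_dual_lift:
  assumes delta: "derivation B dlt" and compat: "\<And>a. a \<in> carrier A \<Longrightarrow> dlt (phi a) = phi (d a)"
    and dW: "derivation W dW" and dW_P: "\<And>a. a \<in> carrier A \<Longrightarrow> dW (P a) = P (d a)"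
    and x: "x \<in> carrier D"
  shows "u (dD x) = tensor_deriv_coords dW dlt (u x) \<longleftrightarrow>
    tensor_map es (\<lambda>w. (w, dW w)) (u x) = dual_lift dlt x"
proof -
  have "u (dD x) k = tensor_deriv_coords dW dlt (u x) k \<longleftrightarrow>
      tensor_map es (\<lambda>w. (w, dW w)) (u x) k = dual_lift dlt x k" for k
  proof (cases "k < n")
    case True
    then show ?thesis
      using x derivation_closed[OF dW] delta_part_closed[of "u x" dlt] derivation_closed[OF delta]
      by (auto simp: tensor_deriv_coords_on[OF d delta compat dW dW_P] T_add_k coordwise_k
          tensor_map_def dual_lift_def W.eq_add_iff_minus_eq)
  next
    case False
    have "u (dD x) k = undefined"
      using PiE_arb[OF u_closed[OF derivation_closed[OF dD x]]] False by simp
    moreover have "tensor_deriv_coords dW dlt (u x) k = undefined"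
      using PiE_arb[OF tensor_deriv_coords_closed[OF d delta compat dW dW_P u_closed[OF x]]] False by simp
    ultimately show ?thesis
      using False by (simp add: tensor_map_def dual_lift_def)
  qed
  then show ?thesis
    by (auto simp: fun_eq_iff)
qed

lemma weil_deriv_cond_iff_factorization:
  assumes delta: "derivation B dlt" and compat: "\<And>a. a \<in> carrier A \<Longrightarrow> dlt (phi a) = phi (d a)"
  shows "weil_deriv_cond A d B phi es dlt D dD W P u dW \<longleftrightarrow>
    derivation W dW \<and> weil_factorization (dual_numbers W) psi (dual_lift dlt) (\<lambda>w. (w, dW w))"
proof (cases "derivation W dW \<and> (\<forall>a\<in>carrier A. dW (P a) = P (d a))")
  case True
  then have dW: "derivation W dW" and dW_P: "\<And>a. a \<in> carrier A \<Longrightarrow> dW (P a) = P (d a)" by auto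
  have "weil_deriv_cond A d B phi es dlt D dD W P u dW \<longleftrightarrow>
      (\<forall>x\<in>carrier D. u (dD x) = tensor_deriv_coords dW dlt (u x))"
    using dW dW_P u P tensor_deriv_eq[OF d delta compat dW dW_P]
    by (auto simp: weil_deriv_cond_def diff_hom_def)
  moreover have "weil_factorization (dual_numbers W) psi (dual_lift dlt) (\<lambda>w. (w, dW w)) \<longleftrightarrow>
      (\<forall>x\<in>carrier D. tensor_map es (\<lambda>w. (w, dW w)) (u x) = dual_lift dlt x)"
    using dW_P W.dual_numbers_hom_of_derivation[OF dW] by (simp add: weil_factorization_def psi_def)
  ultimately show ?thesis
    using dW u_deriv_iff_dual_lift[OF delta compat dW dW_P] by simp
next
  case False
  then show ?thesis
    by (auto simp: weil_deriv_cond_def weil_factorization_def diff_hom_def psi_def)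
qed

context
  assumes wd: "is_weil_descent A B phi es D phiD W P u"
begin

lemma weil_factorization_exists:
  assumes "cring C" "ps \<in> ring_hom A C" "f \<in> ring_hom D (tensor A B phi es C ps)"
    "\<And>b. b \<in> carrier B \<Longrightarrow> f (phiD b) = tensor_inr A B phi es C ps b"
  shows "\<exists>g. weil_factorization C ps f g"
  using wd assms unfolding is_weil_descent_def weil_factorization_def by blast

lemma weil_factorization_unique:
  assumes "cring C" "ps \<in> ring_hom A C" "f \<in> ring_hom D (tensor A B phi es C ps)"
    "\<And>b. b \<in> carrier B \<Longrightarrow> f (phiD b) = tensor_inr A B phi es C ps b"
    and "weil_factorization C ps f g1" "weil_factorization C ps f g2" "w \<in> carrier W"
  shows "g1 w = g2 w"
proof -
  obtain g where "\<forall>g'. weil_factorization C ps f g' \<longrightarrow> (\<forall>w\<in>carrier W. g' w = g w)"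
    using wd assms(1-4) unfolding is_weil_descent_def weil_factorization_def by blast
  then show ?thesis using assms(5-7) by metis
qed

text \<open>The test algebras of the universal property live on the type of W[\<epsilon>]; W itself enters as
  the subring W \<times> {0}, an A-algebra through a \<mapsto> (P a, 0).\<close>
lemma weil_factorization_fst:
  assumes g: "weil_factorization (dual_numbers W) psi (dual_lift dlt) g" and w: "w \<in> carrier W"
  shows "fst (g w) = w"
proof -
  let ?e = "\<lambda>w. (w, \<zero>\<^bsub>W\<^esub>)" and ?p = "\<lambda>q. (fst q, \<zero>\<^bsub>W\<^esub>)" and ?psi0 = "\<lambda>a. (P a, \<zero>\<^bsub>W\<^esub>)"
  have e: "?e \<in> ring_hom W (dual_numbers W)" and p: "?p \<in> ring_hom (dual_numbers W) (dual_numbers W)"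
    by (auto intro!: ring_hom_memI simp: dual_numbers_simps)
  have psi0: "?psi0 \<in> ring_hom A (dual_numbers W)"
    using ring_hom_trans[OF P e] by (simp add: comp_def)
  have f0: "(\<lambda>x. tensor_map es ?e (u x)) \<in> ring_hom D (tensor A B phi es (dual_numbers W) ?psi0)"
    using ring_hom_trans[OF u tensor_map_hom[OF W.cring_dual_numbers e]] by (simp add: comp_def)
  have f0_inr: "tensor_map es ?e (u (phiD b)) = tensor_inr A B phi es (dual_numbers W) ?psi0 b"
    if "b \<in> carrier B" for b
    using that by (simp add: u_inr tensor_map_inr)
  have fe: "weil_factorization (dual_numbers W) ?psi0 (\<lambda>x. tensor_map es ?e (u x)) ?e"
    using e by (simp add: weil_factorization_def)
  have fg: "weil_factorization (dual_numbers W) ?psi0 (\<lambda>x. tensor_map es ?e (u x)) (?p \<circ> g)"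
  proof -
    have "tensor_map es (?p \<circ> g) (u x) = tensor_map es ?e (u x)" if x: "x \<in> carrier D" for x
    proof
      fix k
      have "k < n \<Longrightarrow> g (u x k) = dual_lift dlt x k"
        using g x by (metis weil_factorization_def tensor_map_k)
      then show "tensor_map es (?p \<circ> g) (u x) k = tensor_map es ?e (u x) k"
        by (simp add: tensor_map_def dual_lift_def)
    qed
    then show ?thesis
      using g ring_hom_trans[of g W "dual_numbers W" ?p] p by (auto simp: weil_factorization_def psi_def)
  qed
  have "(?p \<circ> g) w = ?e w"
    by (rule weil_factorization_unique[OF W.cring_dual_numbers psi0 f0 f0_inr fg fe w])
  then show ?thesis by simp
qed

lemma weil_deriv_ex1:
  assumes "derivation B dlt" "diff_hom A d B dlt phi" "diff_hom B dlt D dD phiD"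
  shows "\<exists>dW. weil_deriv_cond A d B phi es dlt D dD W P u dW \<and>
     (\<forall>dW'. weil_deriv_cond A d B phi es dlt D dD W P u dW' \<longrightarrow> (\<forall>w\<in>carrier W. dW' w = dW w))"
proof -
  have delta: "derivation B dlt" "\<And>a. a \<in> carrier A \<Longrightarrow> dlt (phi a) = phi (d a)"
      "\<And>b. b \<in> carrier B \<Longrightarrow> phiD (dlt b) = dD (phiD b)"
    using assms by (auto simp: diff_hom_def)
  note lift = W.cring_dual_numbers psi_hom dual_lift_hom[OF delta] dual_lift_inr[OF delta]
  obtain g where g: "weil_factorization (dual_numbers W) psi (dual_lift dlt) g"
    using weil_factorization_exists[OF lift] by blast
  define dW where "dW w = snd (g w)" for w
  have fst_g: "\<And>w. w \<in> carrier W \<Longrightarrow> fst (g w) = w"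
    by (rule weil_factorization_fst[OF g])
  then have g_eq: "\<And>w. w \<in> carrier W \<Longrightarrow> g w = (w, dW w)"
    by (simp add: dW_def prod_eq_iff)
  have dW: "derivation W dW"
    unfolding dW_def using g fst_g by (intro W.derivation_of_dual_numbers_hom) (auto simp: weil_factorization_def)
  have "weil_factorization (dual_numbers W) psi (dual_lift dlt) (\<lambda>w. (w, dW w))"
  proof -
    have "tensor_map es (\<lambda>w. (w, dW w)) (u x) = tensor_map es g (u x)" if "x \<in> carrier D" for x
      using that by (auto simp: tensor_map_def g_eq)
    then show ?thesis
      using g g_eq W.dual_numbers_hom_of_derivation[OF dW] by (auto simp: weil_factorization_def)
  qed
  then have cond: "weil_deriv_cond A d B phi es dlt D dD W P u dW"
    using dW weil_deriv_cond_iff_factorization[OF delta(1,2)] by blast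
  have "dW' w = dW w"
    if "weil_deriv_cond A d B phi es dlt D dD W P u dW'" "w \<in> carrier W" for dW' w
    using weil_factorization_unique[OF lift, of "\<lambda>w. (w, dW' w)" "\<lambda>w. (w, dW w)" w] that cond
      weil_deriv_cond_iff_factorization[OF delta(1,2)] by auto
  with cond show ?thesis by blast
qed

lemma weil_deriv_indep:
  assumes "derivation B dl1" "diff_hom A d B dl1 phi" "diff_hom B dl1 D dD phiD"
    and "derivation B dl2" "diff_hom A d B dl2 phi" "diff_hom B dl2 D dD phiD"
    and c1: "weil_deriv_cond A d B phi es dl1 D dD W P u dW1"
    and c2: "weil_deriv_cond A d B phi es dl2 D dD W P u dW2"
    and w: "w \<in> carrier W"
  shows "dW1 w = dW2 w"
proof -
  have dl1: "derivation B dl1" "\<And>a. a \<in> carrier A \<Longrightarrow> dl1 (phi a) = phi (d a)"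
      "\<And>b. b \<in> carrier B \<Longrightarrow> phiD (dl1 b) = dD (phiD b)"
    and dl2: "derivation B dl2" "\<And>a. a \<in> carrier A \<Longrightarrow> dl2 (phi a) = phi (d a)"
      "\<And>b. b \<in> carrier B \<Longrightarrow> phiD (dl2 b) = dD (phiD b)"
    using assms by (auto simp: diff_hom_def)
  note lift = W.cring_dual_numbers psi_hom dual_lift_hom[OF dl1] dual_lift_inr[OF dl1]
  have f1: "weil_factorization (dual_numbers W) psi (dual_lift dl1) (\<lambda>w. (w, dW1 w))"
    using c1 weil_deriv_cond_iff_factorization[OF dl1(1,2)] by blast
  have f2: "weil_factorization (dual_numbers W) psi (dual_lift dl1) (\<lambda>w. (w, dW2 w))"
    using c2 weil_deriv_cond_iff_factorization[OF dl2(1,2)] dual_lift_indep[OF dl1(1,3) dl2(1,3)] by simp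
  show ?thesis
    using weil_factorization_unique[OF lift f1 f2 w] by simp
qed

end

end

theorem theorem3p2:
  fixes A :: "'a ring" and d :: "'a \<Rightarrow> 'a"
    and B :: "'b ring" and phi :: "'a \<Rightarrow> 'b" and es :: "'b list" and delta :: "'b \<Rightarrow> 'b"
    and D :: "'d ring" and phiD :: "'b \<Rightarrow> 'd" and dD :: "'d \<Rightarrow> 'd"
    and W :: "'w ring" and phiW :: "'a \<Rightarrow> 'w" and u :: "'d \<Rightarrow> (nat \<Rightarrow> 'w)"
  assumes "cring A" and "cring B" and "cring D"
    and "phi \<in> ring_hom A B" and "phiD \<in> ring_hom B D"
    and "is_basis A B phi es"
    and "derivation A d" and "derivation B delta" and "diff_hom A d B delta phi"
    and "derivation D dD" and "diff_hom B delta D dD phiD"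
    and "is_weil_descent A B phi es D phiD W phiW u"
  shows "(\<exists>dW. weil_deriv_cond A d B phi es delta D dD W phiW u dW \<and>
            (\<forall>dW'. weil_deriv_cond A d B phi es delta D dD W phiW u dW' \<longrightarrow>
                    (\<forall>w\<in>carrier W. dW' w = dW w)))
       \<and> (\<forall>delta' dW1 dW2.
            derivation B delta' \<and> diff_hom A d B delta' phi \<and> diff_hom B delta' D dD phiD \<and>
            weil_deriv_cond A d B phi es delta D dD W phiW u dW1 \<and>
            weil_deriv_cond A d B phi es delta' D dD W phiW u dW2 \<longrightarrow>
            (\<forall>w\<in>carrier W. dW1 w = dW2 w))"
proof -
  interpret weil_setting A B phi es W phiW d D phiD dD u
    using assms unfolding is_weil_descent_def weil_setting_def weil_setting_axioms_def
      tensor_setting_def tensor_setting_axioms_def free_algebra_def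
    by auto
  show ?thesis
    using weil_deriv_ex1[OF assms(12,8,9,11)] weil_deriv_indep[OF assms(12,8,9,11)] by blast
qed

end
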